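(* Let $k$ be an algebraically closed field of characteristic zero and let $A$ be a standard graded $k$-algebra which is not a principal ideal algebra. Let $r=\operatorname{crit.deg.}(A)$ be its critical degree. Then there exists a surjective $k$-algebra homomorphism $$A\twoheadrightarrow Q(r)=k[X,Y]/\langle X^{r+1},X^rY,Y^2\rangle .$$
   Context: All algebras are commutative, unital and finite dimensional over $k$. A principal ideal algebra is a finite dimensional commutative $k$-algebra in which every ideal is principal. A finite dimensional non-negatively graded algebra $A=A_0\oplus A_1\oplus\cdots\oplus A_n$ is standard if $M=A_1\oplus\cdots\oplus A_n$ is a maximal ideal generated by elements of degree one. For such $A$ not a principal ideal algebra, let $\mathcal{E}$ be the set of $i\in\mathbb{N}$ for which there exist $N\ge0$ and a $k$-algebra homomorphism $\alpha:A\to k[t]/\langle t^{N+1}\rangle$ with $\dim_k\alpha(A_i)\ge2$; this set is finite and nonempty, and the critical degree is $\operatorname{crit.deg.}(A)=\max\mathcal{E}$. *)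

theory Defs
  imports "HOL-Computational_Algebra.Polynomial"
begin

text \<open>Ring ideals of a commutative ring (for a k-algebra these coincide with algebra ideals).\<close>
definition is_ideal :: "'a::comm_ring_1 set \<Rightarrow> bool" where
  "is_ideal I \<longleftrightarrow> 0 \<in> I \<and> (\<forall>x\<in>I. \<forall>y\<in>I. x + y \<in> I) \<and> (\<forall>a. \<forall>x\<in>I. a * x \<in> I)"

definition ideal_gen :: "'a::comm_ring_1 set \<Rightarrow> 'a set" where
  "ideal_gen S = \<Inter>{I. is_ideal I \<and> S \<subseteq> I}"

definition maximal_ideal :: "'a::comm_ring_1 set \<Rightarrow> bool" where
  "maximal_ideal I \<longleftrightarrow> is_ideal I \<and> I \<noteq> UNIV \<and>
     (\<forall>J. is_ideal J \<and> I \<subseteq> J \<longrightarrow> J = I \<or> J = UNIV)"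

definition principal_ideal_algebra :: "'a::comm_ring_1 itself \<Rightarrow> bool" where
  "principal_ideal_algebra _ \<longleftrightarrow>
     (\<forall>I::'a set. is_ideal I \<longrightarrow> (\<exists>g. I = {a * g | a. True}))"

definition kalg :: "('k::field \<Rightarrow> 'a::comm_ring_1 \<Rightarrow> 'a) \<Rightarrow> bool" where
  "kalg scale \<longleftrightarrow> vector_space scale \<and>
     (\<forall>c a b. scale c (a * b) = scale c a * b \<and> scale c (a * b) = a * scale c b)"

definition finite_dim :: "('k::field \<Rightarrow> 'a::comm_ring_1 \<Rightarrow> 'a) \<Rightarrow> bool" where
  "finite_dim scale \<longleftrightarrow> (\<exists>B. finite B \<and> module.span scale B = UNIV)"

definition irrelevant_ideal :: "(nat \<Rightarrow> 'a::comm_ring_1 set) \<Rightarrow> 'a set" where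
  "irrelevant_ideal Agr =
     {x. \<exists>n f. (\<forall>i\<in>{1..n}. f i \<in> Agr i) \<and> x = (\<Sum>i=1..n. f i)}"

definition std_graded :: "('k::field \<Rightarrow> 'a::comm_ring_1 \<Rightarrow> 'a) \<Rightarrow> (nat \<Rightarrow> 'a set) \<Rightarrow> bool" where
  "std_graded scale Agr \<longleftrightarrow>
     (\<forall>i. module.subspace scale (Agr i)) \<and>
     (\<forall>i j. \<forall>x\<in>Agr i. \<forall>y\<in>Agr j. x * y \<in> Agr (i + j)) \<and>
     (\<exists>n. (\<forall>i>n. Agr i = {0}) \<and>
          (\<forall>a. \<exists>!f. (\<forall>i. f i \<in> Agr i) \<and> (\<forall>i>n. f i = 0) \<and> a = (\<Sum>i\<le>n. f i))) \<and>
     maximal_ideal (irrelevant_ideal Agr) \<and>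
     irrelevant_ideal Agr = ideal_gen (Agr 1)"

text \<open>A k-algebra homomorphism A \<rightarrow> B/I, represented by a map phi into B (choice of representatives);
  emb is the structure map k \<rightarrow> B.\<close>
definition alg_hom_mod ::
  "('k::field \<Rightarrow> 'a::comm_ring_1 \<Rightarrow> 'a) \<Rightarrow> ('k \<Rightarrow> 'b::comm_ring_1) \<Rightarrow> 'b set \<Rightarrow> ('a \<Rightarrow> 'b) \<Rightarrow> bool" where
  "alg_hom_mod scale emb I \<phi> \<longleftrightarrow>
     (\<forall>a b. \<phi> (a + b) - (\<phi> a + \<phi> b) \<in> I) \<and>
     (\<forall>c a. \<phi> (scale c a) - emb c * \<phi> a \<in> I) \<and>
     (\<forall>a b. \<phi> (a * b) - \<phi> a * \<phi> b \<in> I) \<and>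
     \<phi> 1 - 1 \<in> I"

text \<open>dim_k of the image of S in B/I is at least 2: two k-linearly independent classes.\<close>
definition quot_dim_ge2 :: "('k::field \<Rightarrow> 'b::comm_ring_1) \<Rightarrow> 'b set \<Rightarrow> 'b set \<Rightarrow> bool" where
  "quot_dim_ge2 emb I S \<longleftrightarrow>
     (\<exists>u\<in>S. \<exists>v\<in>S. \<forall>c d. emb c * u + emb d * v \<in> I \<longrightarrow> c = 0 \<and> d = 0)"

definition trunc_ideal :: "nat \<Rightarrow> 'k::field poly set" where
  "trunc_ideal N = {p * [:0, 1:] ^ (N + 1) | p. True}"

definition crit_set :: "('k::field \<Rightarrow> 'a::comm_ring_1 \<Rightarrow> 'a) \<Rightarrow> (nat \<Rightarrow> 'a set) \<Rightarrow> nat set" where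
  "crit_set scale Agr =
     {i. \<exists>N (\<alpha>::'a \<Rightarrow> 'k poly). alg_hom_mod scale (\<lambda>c. [:c:]) (trunc_ideal N) \<alpha> \<and>
           quot_dim_ge2 (\<lambda>c. [:c:]) (trunc_ideal N) (\<alpha> ` Agr i)}"

definition crit_deg :: "('k::field \<Rightarrow> 'a::comm_ring_1 \<Rightarrow> 'a) \<Rightarrow> (nat \<Rightarrow> 'a set) \<Rightarrow> nat" where
  "crit_deg scale Agr = Max (crit_set scale Agr)"

text \<open>k[X,Y] is modelled as ('k poly) poly: outer variable Y, inner variable X.\<close>
definition QX :: "'k::field poly poly" where "QX = [:[:0, 1:]:]"
definition QY :: "'k::field poly poly" where "QY = [:0, 1:]"

definition Q_ideal :: "nat \<Rightarrow> 'k::field poly poly set" where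
  "Q_ideal r = {a * QX ^ (r + 1) + b * (QX ^ r * QY) + c * QY ^ 2 | a b c. True}"

end

theory Submission
  imports Defs
begin

text \<open>
  Since \<open>k\<close> is algebraically closed and \<open>A\<close> is finite-dimensional, \<open>A\<^sub>0 = k\<close>. Since \<open>A\<close> is
  not a principal ideal algebra, \<open>dim A\<^sub>1 \<ge> 2\<close>: otherwise the maximal ideal is generated by one
  nilpotent \<open>w\<close>, every element is a unit or a multiple of \<open>w\<close>, and every ideal is generated by
  a power of \<open>w\<close>. Two functionals separating an independent pair of \<open>A\<^sub>1\<close>, placed in
  \<open>t\<close>-degrees 2 and 3, give a map \<open>A \<rightarrow> k[t]/\<langle>t\<^sup>4\<rangle>\<close>, so \<open>1 \<in> \<E>\<close>; and \<open>\<E>\<close> lies below the top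
  degree, so \<open>r = max \<E>\<close> exists.

  Let \<open>\<alpha> : A \<rightarrow> k[t]/\<langle>t\<^bsup>N+1\<^esup>\<rangle>\<close> witness \<open>r \<in> \<E>\<close>. Let \<open>a\<close> be the least \<open>t\<close>-order of \<open>\<alpha>\<close> on
  \<open>A\<^sub>1\<close>, attained by \<open>l\<^sub>0\<close> with \<open>\<alpha>(l\<^sub>0) = t\<^sup>a g\<close>, \<open>g(0) = 1\<close>, put \<open>H\<^sub>i(z) = g\<^bsup>-i\<^esup> \<alpha>(z)\<close>, and
  let \<open>m > 0\<close> be the first order above \<open>a\<close> at which some \<open>H\<^sub>1(l)\<close>, \<open>l \<in> A\<^sub>1\<close>, is nonzero.
  As \<open>A\<^sub>i\<close> is spanned by products of \<open>i\<close> elements of \<open>A\<^sub>1\<close>, for \<open>z \<in> A\<^sub>i\<close> the only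
  coefficient of \<open>H\<^sub>i(z)\<close> below \<open>a i + m\<close> is the one at \<open>a i\<close>. Hence the coefficients
  \<open>p\<^sub>i(z)\<close> at \<open>a i\<close> and \<open>q\<^sub>i(z)\<close> at \<open>a i + m\<close> multiply like those of \<open>X\<^sup>i\<close> and \<open>X\<^bsup>i-1\<^esup>Y\<close>
  modulo \<open>Y\<^sup>2\<close>, and \<open>z \<mapsto> p\<^sub>i(z) X\<^sup>i + q\<^sub>i(z) X\<^bsup>i-1\<^esup> Y\<close> is an algebra map \<open>A \<rightarrow> Q(r)\<close>.
  Independence of \<open>\<alpha>(A\<^sub>r)\<close> forces \<open>a r + m \<le> N\<close>, so none of these coefficients is truncated
  away. The map sends \<open>l\<^sub>0\<close> to \<open>X\<close>, and an \<open>l \<in> A\<^sub>1\<close> with \<open>q\<^sub>1(l) \<noteq> 0\<close> yields \<open>Y\<close>.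
\<close>

section \<open>Ideals\<close>

lemma is_idealI:
  assumes "0 \<in> I" and "\<And>x y. x \<in> I \<Longrightarrow> y \<in> I \<Longrightarrow> x + y \<in> I" and "\<And>a x. x \<in> I \<Longrightarrow> a * x \<in> I"
  shows "is_ideal I"
  using assms by (simp add: is_ideal_def)

lemma is_ideal_zero: "is_ideal I \<Longrightarrow> 0 \<in> I"
  by (simp add: is_ideal_def)

lemma is_ideal_add: "is_ideal I \<Longrightarrow> x \<in> I \<Longrightarrow> y \<in> I \<Longrightarrow> x + y \<in> I"
  by (simp add: is_ideal_def)

lemma is_ideal_mult: "is_ideal I \<Longrightarrow> x \<in> I \<Longrightarrow> a * x \<in> I"
  by (simp add: is_ideal_def)

lemma is_ideal_uminus: "is_ideal I \<Longrightarrow> x \<in> I \<Longrightarrow> - x \<in> I"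
  using is_ideal_mult[of I x "- 1"] by simp

lemma is_ideal_diff: "is_ideal I \<Longrightarrow> x \<in> I \<Longrightarrow> y \<in> I \<Longrightarrow> x - y \<in> I"
  using is_ideal_add[of I x "- y"] is_ideal_uminus by fastforce

lemma is_ideal_sum: "is_ideal I \<Longrightarrow> (\<And>s. s \<in> S \<Longrightarrow> f s \<in> I) \<Longrightarrow> sum f S \<in> I"
  by (induction S rule: infinite_finite_induct) (auto intro: is_ideal_zero is_ideal_add)

lemma is_ideal_multiples: "is_ideal {a * g | a. True}"
proof (rule is_idealI)
  show "0 \<in> {a * g | a. True}" by (auto intro!: exI[of _ 0])
  show "x + y \<in> {a * g | a. True}" if "x \<in> {a * g | a. True}" "y \<in> {a * g | a. True}" for x y
    using that by (auto simp: distrib_right[symmetric])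
  show "b * x \<in> {a * g | a. True}" if "x \<in> {a * g | a. True}" for b x
    using that by (auto simp: mult.assoc[symmetric])
qed

lemma is_ideal_combinations: "is_ideal {(\<Sum>(a, s)\<leftarrow>L. a * s) | L. set L \<subseteq> UNIV \<times> S}"
proof (rule is_idealI)
  show "0 \<in> {(\<Sum>(a, s)\<leftarrow>L. a * s) | L. set L \<subseteq> UNIV \<times> S}"
    by (auto intro!: exI[of _ "[]"])
next
  fix x y assume "x \<in> {(\<Sum>(a, s)\<leftarrow>L. a * s) | L. set L \<subseteq> UNIV \<times> S}"
    and "y \<in> {(\<Sum>(a, s)\<leftarrow>L. a * s) | L. set L \<subseteq> UNIV \<times> S}"
  then obtain L M where "set L \<subseteq> UNIV \<times> S" "x = (\<Sum>(a, s)\<leftarrow>L. a * s)"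
    and "set M \<subseteq> UNIV \<times> S" "y = (\<Sum>(a, s)\<leftarrow>M. a * s)" by blast
  then show "x + y \<in> {(\<Sum>(a, s)\<leftarrow>L. a * s) | L. set L \<subseteq> UNIV \<times> S}"
    by (auto intro!: exI[of _ "L @ M"])
next
  fix b x assume "x \<in> {(\<Sum>(a, s)\<leftarrow>L. a * s) | L. set L \<subseteq> UNIV \<times> S}"
  then obtain L where L: "set L \<subseteq> UNIV \<times> S" "x = (\<Sum>(a, s)\<leftarrow>L. a * s)" by blast
  have "b * x = (\<Sum>(a, s)\<leftarrow>map (\<lambda>(a, s). (b * a, s)) L. a * s)"
    unfolding L(2) by (induction L) (auto simp: algebra_simps)
  moreover have "set (map (\<lambda>(a, s). (b * a, s)) L) \<subseteq> UNIV \<times> S" using L(1) by auto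
  ultimately show "b * x \<in> {(\<Sum>(a, s)\<leftarrow>L. a * s) | L. set L \<subseteq> UNIV \<times> S}" by blast
qed

lemma is_ideal_add_multiples: "is_ideal M \<Longrightarrow> is_ideal {m + b * x | m b. m \<in> M}"
proof (rule is_idealI)
  assume M: "is_ideal M"
  have "(0::'a) = 0 + 0 * x" by simp
  then show "0 \<in> {m + b * x | m b. m \<in> M}" using is_ideal_zero[OF M] by blast
  show "u + v \<in> {m + b * x | m b. m \<in> M}"
    if uv: "u \<in> {m + b * x | m b. m \<in> M}" "v \<in> {m + b * x | m b. m \<in> M}" for u v
  proof -
    obtain m b m' b' where "u = m + b * x" "v = m' + b' * x" "m \<in> M" "m' \<in> M"
      using uv by blast
    moreover from this have "u + v = (m + m') + (b + b') * x" by (simp add: algebra_simps)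
    ultimately show ?thesis using is_ideal_add[OF M] by blast
  qed
  show "a * u \<in> {m + b * x | m b. m \<in> M}" if u: "u \<in> {m + b * x | m b. m \<in> M}" for a u
  proof -
    obtain m b where "u = m + b * x" "m \<in> M" using u by blast
    moreover from this have "a * u = a * m + (a * b) * x" by (simp add: algebra_simps)
    ultimately show ?thesis using is_ideal_mult[OF M] by blast
  qed
qed

lemma ideal_gen_subset: "is_ideal I \<Longrightarrow> S \<subseteq> I \<Longrightarrow> ideal_gen S \<subseteq> I"
  unfolding ideal_gen_def by blast

lemma mem_ideal_gen_combination:
  assumes "x \<in> ideal_gen S"
  obtains L where "set L \<subseteq> UNIV \<times> S" and "x = (\<Sum>(a, s)\<leftarrow>L. a * s)"
proof -
  have "S \<subseteq> {(\<Sum>(a, s)\<leftarrow>L. a * s) | L. set L \<subseteq> UNIV \<times> S}"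
    by (force intro: exI[of _ "[(1, s)]" for s])
  with assms show ?thesis
    using ideal_gen_subset[OF is_ideal_combinations] that by blast
qed

lemma nilpotent_one_plus_is_unit:
  fixes y :: "'a::comm_ring_1"
  assumes "y ^ n = 0"
  shows "(1 + y) dvd 1"
proof -
  have "1 - (- y) ^ n = (1 - (- y)) * (\<Sum>i<n. (- y) ^ i)" by (rule one_diff_power_eq)
  also have "(- y) ^ n = 0" using assms by (simp add: power_minus')
  finally show ?thesis by (auto intro: dvdI)
qed

lemma power_times_unit_if_units_or_multiples:
  fixes w :: "'a::comm_ring_1"
  assumes nilpotent: "w ^ n = 0" and unit_or_multiple: "\<And>x. x dvd 1 \<or> w dvd x"
  obtains j z where "z dvd 1" and "x = w ^ j * z"
proof (cases "x = 0")
  case True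
  then show ?thesis using that[of 1 n] nilpotent by simp
next
  case False
  have bounded: "j < n" if "w ^ j dvd x" for j
  proof (rule ccontr)
    assume "\<not> j < n"
    then have "w ^ n dvd x" using that by (meson dvd_trans le_imp_power_dvd not_less)
    then show False using nilpotent \<open>x \<noteq> 0\<close> by simp
  qed
  define j where "j = Max {j. w ^ j dvd x}"
  have finite: "finite {j. w ^ j dvd x}" using bounded by (auto intro: finite_subset[of _ "{..<n}"])
  have "j \<in> {j. w ^ j dvd x}"
    unfolding j_def by (rule Max_in[OF finite]) (auto intro: exI[of _ 0])
  then obtain z where z: "x = w ^ j * z" by auto
  have "\<not> w dvd z"
  proof
    assume "w dvd z"
    then have "w ^ Suc j dvd x" using z by (simp add: mult_dvd_mono mult.commute)
    then show False using Max_ge[OF finite, of "Suc j"] by (simp add: j_def)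
  qed
  then show ?thesis using z unit_or_multiple[of z] that by blast
qed

lemma principal_ideal_algebra_if_units_or_multiples:
  fixes w :: "'a::comm_ring_1"
  assumes nilpotent: "w ^ n = 0" and unit_or_multiple: "\<And>x. x dvd 1 \<or> w dvd x"
  shows "principal_ideal_algebra TYPE('a)"
proof -
  note unit_times_power = power_times_unit_if_units_or_multiples[OF nilpotent unit_or_multiple]
  show ?thesis
    unfolding principal_ideal_algebra_def
  proof (intro allI impI)
    fix I :: "'a set" assume I: "is_ideal I"
    let ?P = "\<lambda>j. \<exists>x\<in>I. \<exists>z. z dvd 1 \<and> x = w ^ j * z"
    define j where "j = (LEAST j. ?P j)"
    have "?P n" using is_ideal_zero[OF I] nilpotent by (auto intro!: bexI[of _ 0] exI[of _ 1])
    then have "?P j" unfolding j_def by (rule LeastI)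
    then obtain x z z' where "x \<in> I" "x = w ^ j * z" "1 = z * z'" by auto
    then have "z' * x = w ^ j" by (metis mult.assoc mult.commute mult_1)
    with \<open>x \<in> I\<close> have wj: "w ^ j \<in> I" using is_ideal_mult[OF I] by metis
    have "I = {a * w ^ j | a. True}"
    proof
      show "I \<subseteq> {a * w ^ j | a. True}"
      proof
        fix x assume "x \<in> I"
        obtain i z where "z dvd 1" "x = w ^ i * z" by (rule unit_times_power)
        moreover from this have "j \<le> i" unfolding j_def using \<open>x \<in> I\<close> by (blast intro: Least_le)
        ultimately have "x = (w ^ (i - j) * z) * w ^ j"
          by (simp add: algebra_simps flip: power_add)
        then show "x \<in> {a * w ^ j | a. True}" by blast
      qed
      show "{a * w ^ j | a. True} \<subseteq> I" using wj is_ideal_mult[OF I] by blast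
    qed
    then show "\<exists>g. I = {a * g | a. True}" by blast
  qed
qed

section \<open>Polynomials up to a degree\<close>

definition eq_upto :: "nat \<Rightarrow> 'a::zero poly \<Rightarrow> 'a poly \<Rightarrow> bool" where
  "eq_upto N p q \<longleftrightarrow> (\<forall>k\<le>N. coeff p k = coeff q k)"

lemma eq_upto_refl [simp]: "eq_upto N p p"
  by (simp add: eq_upto_def)

lemma eq_upto_sym: "eq_upto N p q \<Longrightarrow> eq_upto N q p"
  by (simp add: eq_upto_def)

lemma eq_upto_trans [trans]: "eq_upto N p q \<Longrightarrow> eq_upto N q s \<Longrightarrow> eq_upto N p s"
  by (simp add: eq_upto_def)

lemma eq_upto_coeff: "eq_upto N p q \<Longrightarrow> k \<le> N \<Longrightarrow> coeff p k = coeff q k"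
  by (simp add: eq_upto_def)

lemma eq_upto_add: "eq_upto N p p' \<Longrightarrow> eq_upto N q q' \<Longrightarrow> eq_upto N (p + q) (p' + q')"
  by (simp add: eq_upto_def)

lemma eq_upto_smult: "eq_upto N p p' \<Longrightarrow> eq_upto N (smult c p) (smult c p')"
  by (simp add: eq_upto_def)

lemma eq_upto_mult:
  fixes p :: "'a::comm_semiring_0 poly"
  shows "eq_upto N p p' \<Longrightarrow> eq_upto N q q' \<Longrightarrow> eq_upto N (p * q) (p' * q')"
  unfolding eq_upto_def coeff_mult by (auto intro!: sum.cong)

lemma eq_upto_mult_left:
  fixes p :: "'a::comm_semiring_0 poly"
  shows "eq_upto N q q' \<Longrightarrow> eq_upto N (p * q) (p * q')"
  by (simp add: eq_upto_mult)

lemma eq_upto_power: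
  fixes p :: "'a::comm_semiring_1 poly"
  shows "eq_upto N p p' \<Longrightarrow> eq_upto N (p ^ n) (p' ^ n)"
  by (induction n) (auto intro: eq_upto_mult)

lemma eq_upto_sum_list_0:
  "(\<And>x. x \<in> set xs \<Longrightarrow> eq_upto N (f x) 0) \<Longrightarrow> eq_upto N (\<Sum>x\<leftarrow>xs. f x) 0"
  by (induction xs) (auto simp: eq_upto_def)

lemma eq_upto_monom_mult_0: "n > N \<Longrightarrow> eq_upto N (monom 1 n * p) 0"
  by (simp add: eq_upto_def coeff_monom_mult)

lemma X_power_eq_monom: "[:0, 1:] ^ n = monom 1 n"
  by (simp add: monom_altdef)

lemma mem_trunc_ideal_iff: "p \<in> trunc_ideal N \<longleftrightarrow> eq_upto N p 0"
proof
  assume "p \<in> trunc_ideal N"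
  then obtain q where "p = q * [:0, 1:] ^ (N + 1)"
    by (auto simp: trunc_ideal_def)
  then have "p = monom 1 (N + 1) * q"
    by (simp only: X_power_eq_monom mult.commute)
  then show "eq_upto N p 0" by (simp add: eq_upto_monom_mult_0)
next
  assume "eq_upto N p 0"
  then have "p = poly_shift (N + 1) p * [:0, 1:] ^ (N + 1)"
    unfolding X_power_eq_monom mult.commute[of _ "monom 1 (N + 1)"]
    by (intro poly_eqI) (auto simp: eq_upto_def coeff_poly_shift coeff_monom_mult)
  then show "p \<in> trunc_ideal N" unfolding trunc_ideal_def by blast
qed

lemma diff_mem_trunc_ideal_iff: "p - q \<in> trunc_ideal N \<longleftrightarrow> eq_upto N p q"
  by (simp add: mem_trunc_ideal_iff eq_upto_def)

lemma is_ideal_trunc_ideal: "is_ideal (trunc_ideal N)"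
  by (rule is_idealI) (auto simp: mem_trunc_ideal_iff eq_upto_def coeff_mult)

lemma eq_upto_inverse_exists:
  fixes g :: "'a::comm_ring_1 poly"
  assumes "coeff g 0 = 1"
  obtains h where "eq_upto N (g * h) 1"
proof
  have "[:0, 1:] dvd 1 - g"
    using assms by (simp add: dvd_iff_poly_eq_0 poly_0_coeff_0)
  then obtain q where "1 - g = [:0, 1:] * q" by (rule dvdE)
  then have "(1 - g) ^ (N + 1) = monom 1 (N + 1) * q ^ (N + 1)"
    by (simp only: power_mult_distrib X_power_eq_monom)
  then have "eq_upto N ((1 - g) ^ (N + 1)) 0" by (simp add: eq_upto_monom_mult_0)
  moreover have "g * (\<Sum>i<N + 1. (1 - g) ^ i) = 1 - (1 - g) ^ (N + 1)"
    using one_diff_power_eq[of "1 - g" "N + 1"] by simp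
  ultimately show "eq_upto N (g * (\<Sum>i<N + 1. (1 - g) ^ i)) 1"
    by (simp add: eq_upto_def)
qed

definition gapped :: "nat \<Rightarrow> nat \<Rightarrow> nat \<Rightarrow> 'a::zero poly \<Rightarrow> bool" where
  "gapped N m u P \<longleftrightarrow> (\<forall>k\<le>N. k \<noteq> u \<and> k < u + m \<longrightarrow> coeff P k = 0)"

lemma gappedI: "(\<And>k. k \<le> N \<Longrightarrow> k \<noteq> u \<Longrightarrow> k < u + m \<Longrightarrow> coeff P k = 0) \<Longrightarrow> gapped N m u P"
  by (simp add: gapped_def)

lemma gappedD: "gapped N m u P \<Longrightarrow> k \<le> N \<Longrightarrow> k \<noteq> u \<Longrightarrow> k < u + m \<Longrightarrow> coeff P k = 0"
  by (simp add: gapped_def)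

lemma gapped_sum_list:
  "(\<And>x. x \<in> set xs \<Longrightarrow> gapped N m u (f x)) \<Longrightarrow> gapped N m u (\<Sum>x\<leftarrow>xs. f x)"
  by (induction xs) (auto simp: gapped_def)

lemma gapped_eq_upto: "eq_upto N P Q \<Longrightarrow> gapped N m u Q \<Longrightarrow> gapped N m u P"
  by (simp add: gapped_def eq_upto_def)

lemma gapped_mult:
  fixes P Q :: "'a::comm_semiring_0 poly"
  assumes P: "gapped N m u P" and Q: "gapped N m v Q"
  shows "gapped N m (u + v) (P * Q)"
proof (rule gappedI)
  fix k assume k: "k \<le> N" "k \<noteq> u + v" "k < u + v + m"
  show "coeff (P * Q) k = 0"
    unfolding coeff_mult
  proof (intro sum.neutral ballI)
    fix i assume i: "i \<in> {..k}"
    show "coeff P i * coeff Q (k - i) = 0"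
    proof (cases "i \<noteq> u \<and> i < u + m")
      case True then show ?thesis using gappedD[OF P] i k by auto
    next
      case False then show ?thesis using gappedD[OF Q, of "k - i"] i k by auto
    qed
  qed
qed

lemma coeff_mult_gapped_lowest:
  fixes P Q :: "'a::comm_semiring_0 poly"
  assumes P: "gapped N m u P" and Q: "gapped N m v Q" and "u + v \<le> N"
  shows "coeff (P * Q) (u + v) = coeff P u * coeff Q v"
proof -
  have "coeff (P * Q) (u + v) = (\<Sum>i\<in>{u}. coeff P i * coeff Q (u + v - i))"
    unfolding coeff_mult
  proof (intro sum.mono_neutral_right ballI)
    fix i assume i: "i \<in> {..u + v} - {u}"
    show "coeff P i * coeff Q (u + v - i) = 0"
    proof (cases "i < u + m")
      case True then show ?thesis using gappedD[OF P] i assms(3) by auto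
    next
      case False then show ?thesis using gappedD[OF Q, of "u + v - i"] i assms(3) by auto
    qed
  qed auto
  then show ?thesis by simp
qed

lemma coeff_mult_gapped_next:
  fixes P Q :: "'a::comm_semiring_0 poly"
  assumes P: "gapped N m u P" and Q: "gapped N m v Q" and "u + v + m \<le> N" and "0 < m"
  shows "coeff (P * Q) (u + v + m) = coeff P u * coeff Q (v + m) + coeff P (u + m) * coeff Q v"
proof -
  have "coeff (P * Q) (u + v + m) = (\<Sum>i\<in>{u, u + m}. coeff P i * coeff Q (u + v + m - i))"
    unfolding coeff_mult
  proof (intro sum.mono_neutral_right ballI)
    fix i assume i: "i \<in> {..u + v + m} - {u, u + m}"
    show "coeff P i * coeff Q (u + v + m - i) = 0"
    proof (cases "i < u + m")
      case True then show ?thesis using gappedD[OF P] i assms(3) by auto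
    next
      case False then show ?thesis using gappedD[OF Q, of "u + v + m - i"] i assms(3) by auto
    qed
  qed auto
  then show ?thesis
    using \<open>0 < m\<close> by (simp add: add.commute add.left_commute)
qed

section \<open>The algebra \<open>Q(r)\<close>\<close>

lemma is_ideal_Q_ideal: "is_ideal (Q_ideal r :: 'k::field poly poly set)"
proof (rule is_idealI)
  show "0 \<in> Q_ideal r"
    unfolding Q_ideal_def by (auto intro!: exI[of _ 0])
  show "x + y \<in> Q_ideal r" if xy: "x \<in> Q_ideal r" "y \<in> Q_ideal r" for x y :: "'k poly poly"
  proof -
    obtain a b c a' b' c' :: "'k poly poly" where "x = a * QX ^ (r + 1) + b * (QX ^ r * QY) + c * QY ^ 2"
      and "y = a' * QX ^ (r + 1) + b' * (QX ^ r * QY) + c' * QY ^ 2"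
      using xy unfolding Q_ideal_def by blast
    then have "x + y = (a + a') * QX ^ (r + 1) + (b + b') * (QX ^ r * QY) + (c + c') * QY ^ 2"
      by (simp add: algebra_simps)
    then show ?thesis unfolding Q_ideal_def by blast
  qed
  show "d * x \<in> Q_ideal r" if x: "x \<in> Q_ideal r" for d x :: "'k poly poly"
  proof -
    obtain a b c :: "'k poly poly" where "x = a * QX ^ (r + 1) + b * (QX ^ r * QY) + c * QY ^ 2"
      using x unfolding Q_ideal_def by blast
    then have "d * x = (d * a) * QX ^ (r + 1) + (d * b) * (QX ^ r * QY) + (d * c) * QY ^ 2"
      by (simp add: algebra_simps)
    then show ?thesis unfolding Q_ideal_def by blast
  qed
qed

lemma QX_power_in_Q_ideal: "r < k \<Longrightarrow> QX ^ k \<in> Q_ideal r"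
  unfolding Q_ideal_def
  by (rule CollectI, rule exI[of _ "QX ^ (k - (r + 1))"], rule exI[of _ 0], rule exI[of _ 0])
    (use power_add[of QX "k - (r + 1)" "r + 1"] in simp)

lemma QX_power_QY_in_Q_ideal: "r \<le> k \<Longrightarrow> QX ^ k * QY \<in> Q_ideal r"
  unfolding Q_ideal_def
  by (rule CollectI, rule exI[of _ 0], rule exI[of _ "QX ^ (k - r)"], rule exI[of _ 0])
    (simp flip: mult.assoc power_add)

lemma QY_square_in_Q_ideal: "QY ^ 2 \<in> Q_ideal r"
  unfolding Q_ideal_def
  by (rule CollectI, rule exI[of _ 0], rule exI[of _ 0], rule exI[of _ 1]) simp

text \<open>For \<open>i \<ge> 1\<close> the general element of degree \<open>i\<close> of \<open>Q(r)\<close>; at \<open>i = 0\<close> truncated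
  subtraction turns the second term into \<open>q Y\<close>.\<close>
definition Q_monomial :: "nat \<Rightarrow> 'k::field \<Rightarrow> 'k \<Rightarrow> 'k poly poly" where
  "Q_monomial i p q = [:[:p:]:] * QX ^ i + [:[:q:]:] * QX ^ (i - 1) * QY"

lemma const_poly_poly_add: "[:[:p + p':]:] = [:[:p:]:] + ([:[:p':]:] :: 'a::comm_ring_1 poly poly)"
  by simp

lemma const_poly_poly_mult: "[:[:p * p':]:] = [:[:p:]:] * ([:[:p':]:] :: 'a::comm_ring_1 poly poly)"
  by simp

lemma Q_monomial_add: "Q_monomial i (p + p') (q + q') = Q_monomial i p q + Q_monomial i p' q'"
  unfolding Q_monomial_def const_poly_poly_add by (simp only: algebra_simps)

lemma Q_monomial_mult_const: "Q_monomial i (c * p) (c * q) = [:[:c:]:] * Q_monomial i p q"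
  unfolding Q_monomial_def const_poly_poly_mult by (simp only: algebra_simps)

lemma Q_monomial_mem_Q_ideal: "r < i \<Longrightarrow> Q_monomial i p q \<in> Q_ideal r"
  unfolding Q_monomial_def mult.assoc
  by (intro is_ideal_add[OF is_ideal_Q_ideal] is_ideal_mult[OF is_ideal_Q_ideal]
      QX_power_in_Q_ideal QX_power_QY_in_Q_ideal) auto

lemma Q_monomial_mult:
  "Q_monomial (Suc i) p q * Q_monomial (Suc j) p' q' - Q_monomial (Suc i + Suc j) (p * p') (p * q' + q * p')
     \<in> Q_ideal r"
proof -
  have "Suc i + Suc j - 1 = Suc (i + j)" by simp
  then have product: "Q_monomial (Suc i) p q * Q_monomial (Suc j) p' q' -
      Q_monomial (Suc i + Suc j) (p * p') (p * q' + q * p') = ([:[:q * q':]:] * QX ^ (i + j)) * QY ^ 2"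
    unfolding Q_monomial_def const_poly_poly_add const_poly_poly_mult
    by (simp only: diff_Suc_1 power_add power_Suc power2_eq_square algebra_simps)
  show ?thesis
    unfolding product by (rule is_ideal_mult[OF is_ideal_Q_ideal QY_square_in_Q_ideal])
qed

lemma Q_monomial_mult_mem_Q_ideal:
  assumes "r < Suc i + Suc j"
  shows "Q_monomial (Suc i) p q * Q_monomial (Suc j) p' q' \<in> Q_ideal r"
proof -
  have "Q_monomial (Suc i) p q * Q_monomial (Suc j) p' q' =
      (Q_monomial (Suc i) p q * Q_monomial (Suc j) p' q' - Q_monomial (Suc i + Suc j) (p * p') (p * q' + q * p'))
      + Q_monomial (Suc i + Suc j) (p * p') (p * q' + q * p')"
    by simp
  also have "\<dots> \<in> Q_ideal r"
    using assms by (intro is_ideal_add[OF is_ideal_Q_ideal] Q_monomial_mult Q_monomial_mem_Q_ideal)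
  finally show ?thesis .
qed

context
  fixes scale :: "'k::field \<Rightarrow> 'a::comm_ring_1 \<Rightarrow> 'a" and \<phi> :: "'a \<Rightarrow> 'k poly poly" and I
  assumes I: "is_ideal I" and hom: "alg_hom_mod scale (\<lambda>c. [:[:c:]:]) I \<phi>"
begin

lemma alg_hom_mod_add: "\<phi> (a + b) - (\<phi> a + \<phi> b) \<in> I"
  and alg_hom_mod_scale: "\<phi> (scale c a) - [:[:c:]:] * \<phi> a \<in> I"
  and alg_hom_mod_mult: "\<phi> (a * b) - \<phi> a * \<phi> b \<in> I"
  and alg_hom_mod_one: "\<phi> 1 - 1 \<in> I"
  using hom by (simp_all add: alg_hom_mod_def)

lemma alg_hom_mod_image_add:
  assumes "q - \<phi> a \<in> I" and "q' - \<phi> a' \<in> I"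
  shows "q + q' - \<phi> (a + a') \<in> I"
proof -
  have "q + q' - \<phi> (a + a') = (q - \<phi> a) + (q' - \<phi> a') - (\<phi> (a + a') - (\<phi> a + \<phi> a'))"
    by simp
  also have "\<dots> \<in> I"
    by (rule is_ideal_diff[OF I is_ideal_add[OF I assms] alg_hom_mod_add])
  finally show ?thesis .
qed

lemma alg_hom_mod_image_mult:
  assumes "q - \<phi> a \<in> I" and "q' - \<phi> a' \<in> I"
  shows "q * q' - \<phi> (a * a') \<in> I"
proof -
  have "q * q' - \<phi> (a * a') = q' * (q - \<phi> a) + \<phi> a * (q' - \<phi> a') - (\<phi> (a * a') - \<phi> a * \<phi> a')"
    by (simp add: algebra_simps)
  also have "\<dots> \<in> I"
    by (rule is_ideal_diff[OF I is_ideal_add[OF I is_ideal_mult[OF I assms(1)] is_ideal_mult[OF I assms(2)]]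
          alg_hom_mod_mult])
  finally show ?thesis .
qed

lemma alg_hom_mod_image_const: "[:[:c:]:] - \<phi> (scale c 1) \<in> I"
proof -
  have "[:[:c:]:] - \<phi> (scale c 1) = - ([:[:c:]:] * (\<phi> 1 - 1) + (\<phi> (scale c 1) - [:[:c:]:] * \<phi> 1))"
    by (simp only: right_diff_distrib mult_1_right) simp
  also have "\<dots> \<in> I"
    by (rule is_ideal_uminus[OF I is_ideal_add[OF I is_ideal_mult[OF I alg_hom_mod_one] alg_hom_mod_scale]])
  finally show ?thesis .
qed

lemma alg_hom_mod_surjective_if_generators:
  assumes X: "\<exists>a. QX - \<phi> a \<in> I" and Y: "\<exists>a. QY - \<phi> a \<in> I"
  shows "\<exists>a. q - \<phi> a \<in> I"
proof -
  let ?S = "{q. \<exists>a. q - \<phi> a \<in> I}"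
  have add: "q + q' \<in> ?S" and mult: "q * q' \<in> ?S" if "q \<in> ?S" "q' \<in> ?S" for q q'
    using that alg_hom_mod_image_add alg_hom_mod_image_mult by blast+
  have const: "[:[:c:]:] \<in> ?S" for c
    using alg_hom_mod_image_const by blast
  have inner: "[:p:] \<in> ?S" for p
  proof (induction p)
    case (pCons c p)
    have "[:pCons c p:] = [:[:c:]:] + QX * [:p:]" by (simp add: QX_def)
    then show ?case using add[OF const mult[OF _ pCons.IH]] X by simp
  qed (use const[of 0] in simp)
  have "q \<in> ?S"
  proof (induction q)
    case (pCons p q)
    have "pCons p q = [:p:] + QY * q" by (simp add: QY_def)
    then show ?case using add[OF inner mult[OF _ pCons.IH]] Y by simp
  qed (use const[of 0] in simp)
  then show ?thesis by simp
qed

end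

section \<open>Standard graded algebras\<close>

locale std_graded_algebra =
  fixes scale :: "'k::field \<Rightarrow> 'a::comm_ring_1 \<Rightarrow> 'a" and Agr :: "nat \<Rightarrow> 'a set"
  assumes kalg: "kalg scale" and std_graded: "std_graded scale Agr"
begin

sublocale V: vector_space scale
  using kalg by (simp add: kalg_def)

lemma scale_mult_left: "scale c (a * b) = scale c a * b"
  using kalg by (simp add: kalg_def)

lemma scale_eq_mult: "scale c a = scale c 1 * a"
  using scale_mult_left[of c 1 a] by simp

lemma scale_one_inj: "scale c 1 = scale d 1 \<Longrightarrow> c = d"
  by (metis V.scale_cancel_right zero_neq_one)

lemma scale_one_mult: "scale c 1 * scale d 1 = scale (c * d) 1"
  by (simp flip: scale_eq_mult)

lemma subspace_Agr: "V.subspace (Agr i)"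
  using std_graded by (simp add: std_graded_def)

lemma mult_mem_Agr: "x \<in> Agr i \<Longrightarrow> y \<in> Agr j \<Longrightarrow> x * y \<in> Agr (i + j)"
  using std_graded by (simp add: std_graded_def)

lemma zero_mem_Agr: "0 \<in> Agr i"
  using subspace_Agr V.subspace_0 by blast

lemma add_mem_Agr: "x \<in> Agr i \<Longrightarrow> y \<in> Agr i \<Longrightarrow> x + y \<in> Agr i"
  using subspace_Agr V.subspace_add by blast

lemma scale_mem_Agr: "x \<in> Agr i \<Longrightarrow> scale c x \<in> Agr i"
  using subspace_Agr V.subspace_scale by blast

lemma diff_mem_Agr: "x \<in> Agr i \<Longrightarrow> y \<in> Agr i \<Longrightarrow> x - y \<in> Agr i"
  using subspace_Agr V.subspace_diff by blast

definition top_deg :: nat where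
  "top_deg = (SOME n. (\<forall>i>n. Agr i = {0}) \<and>
     (\<forall>a. \<exists>!f. (\<forall>i. f i \<in> Agr i) \<and> (\<forall>i>n. f i = 0) \<and> a = (\<Sum>i\<le>n. f i)))"

lemma top_deg:
  "(\<forall>i>top_deg. Agr i = {0}) \<and>
   (\<forall>a. \<exists>!f. (\<forall>i. f i \<in> Agr i) \<and> (\<forall>i>top_deg. f i = 0) \<and> a = (\<Sum>i\<le>top_deg. f i))"
  unfolding top_deg_def by (rule someI_ex) (use std_graded in \<open>simp add: std_graded_def\<close>)

lemma Agr_above_top_deg: "top_deg < i \<Longrightarrow> Agr i = {0}"
  using top_deg by blast

definition hcomp :: "'a \<Rightarrow> nat \<Rightarrow> 'a" where
  "hcomp a = (THE f. (\<forall>i. f i \<in> Agr i) \<and> (\<forall>i>top_deg. f i = 0) \<and> a = (\<Sum>i\<le>top_deg. f i))"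

lemma hcomp:
  "(\<forall>i. hcomp a i \<in> Agr i) \<and> (\<forall>i>top_deg. hcomp a i = 0) \<and> a = (\<Sum>i\<le>top_deg. hcomp a i)"
  unfolding hcomp_def by (rule theI'[OF top_deg[THEN conjunct2, rule_format]])

lemma hcomp_mem_Agr: "hcomp a i \<in> Agr i"
  using hcomp by blast

lemma sum_hcomp: "(\<Sum>i\<le>top_deg. hcomp a i) = a"
  using hcomp by simp

lemma hcomp_unique:
  "(\<And>i. f i \<in> Agr i) \<Longrightarrow> (\<And>i. top_deg < i \<Longrightarrow> f i = 0) \<Longrightarrow> a = (\<Sum>i\<le>top_deg. f i) \<Longrightarrow> hcomp a = f"
  unfolding hcomp_def by (rule the1_equality[OF top_deg[THEN conjunct2, rule_format]]) simp

lemma hcomp_of_sum: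
  assumes "\<And>i. f i \<in> Agr i"
  shows "hcomp (\<Sum>i\<le>K. f i) i = (if i \<le> K then f i else 0)"
proof -
  define g where "g i = (if i \<le> K then f i else 0)" for i
  have g: "g i \<in> Agr i" for i using assms zero_mem_Agr by (simp add: g_def)
  then have g_top: "g i = 0" if "top_deg < i" for i using Agr_above_top_deg that by blast
  have "(\<Sum>i\<le>K. f i) = (\<Sum>i\<le>max K top_deg. g i)"
    by (rule sum.mono_neutral_cong_left) (auto simp: g_def)
  also have "\<dots> = (\<Sum>i\<le>top_deg. g i)"
    by (rule sum.mono_neutral_right) (use g_top in auto)
  finally have "hcomp (\<Sum>i\<le>K. f i) = g" by (intro hcomp_unique g g_top)
  then show ?thesis by (simp add: g_def)
qed

lemma hcomp_homogeneous: "x \<in> Agr j \<Longrightarrow> hcomp x i = (if i = j then x else 0)"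
  using hcomp_of_sum[of "\<lambda>i. if i = j then x else 0" j i] zero_mem_Agr by auto

lemma hcomp_zero [simp]: "hcomp 0 i = 0"
  using hcomp_homogeneous[OF zero_mem_Agr[of 0]] by simp

lemma hcomp_add: "hcomp (a + b) i = hcomp a i + hcomp b i"
proof -
  have "hcomp (a + b) = (\<lambda>i. hcomp a i + hcomp b i)"
    by (rule hcomp_unique) (use hcomp in \<open>auto simp: add_mem_Agr hcomp_mem_Agr sum.distrib\<close>)
  then show ?thesis by simp
qed

lemma hcomp_scale: "hcomp (scale c a) i = scale c (hcomp a i)"
proof -
  have "hcomp (scale c a) = (\<lambda>i. scale c (hcomp a i))"
  proof (rule hcomp_unique)
    show "scale c a = (\<Sum>i\<le>top_deg. scale c (hcomp a i))"
      by (simp add: sum_hcomp flip: V.scale_sum_right)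
  qed (use hcomp in \<open>auto simp: scale_mem_Agr hcomp_mem_Agr\<close>)
  then show ?thesis by simp
qed

lemma hcomp_diff: "hcomp (a - b) i = hcomp a i - hcomp b i"
  using hcomp_add[of "a - b" b i] by (simp add: algebra_simps)

lemma hcomp_sum: "hcomp (sum f S) i = (\<Sum>s\<in>S. hcomp (f s) i)"
  by (induction S rule: infinite_finite_induct) (auto simp: hcomp_add)

lemma hcomp_mult_homogeneous:
  assumes y: "y \<in> Agr j"
  shows "hcomp (b * y) k = (if j \<le> k then hcomp b (k - j) * y else 0)"
proof -
  define f where "f k = (if j \<le> k then hcomp b (k - j) * y else 0)" for k
  have f: "f k \<in> Agr k" for k
    using mult_mem_Agr[OF hcomp_mem_Agr y, of b "k - j"] zero_mem_Agr by (auto simp: f_def)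
  have "b * y = (\<Sum>i\<le>top_deg. hcomp b i * y)"
    by (simp add: sum_hcomp flip: sum_distrib_right)
  also have "\<dots> = (\<Sum>k\<in>(\<lambda>i. i + j) ` {..top_deg}. f k)"
    by (subst sum.reindex) (auto simp: f_def inj_on_def)
  also have "\<dots> = (\<Sum>k\<le>top_deg + j. f k)"
  proof (rule sum.mono_neutral_left)
    show "\<forall>k\<in>{..top_deg + j} - (\<lambda>i. i + j) ` {..top_deg}. f k = 0"
    proof
      fix k assume k: "k \<in> {..top_deg + j} - (\<lambda>i. i + j) ` {..top_deg}"
      show "f k = 0"
      proof (cases "j \<le> k")
        case True
        then have "k \<in> (\<lambda>i. i + j) ` {..top_deg}"
          using k by (auto intro!: image_eqI[of _ _ "k - j"])
        then show ?thesis using k by blast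
      qed (simp add: f_def)
    qed
  qed auto
  finally show ?thesis
    using hcomp_of_sum[OF f, of "top_deg + j" k] hcomp by (auto simp: f_def)
qed

lemma one_mem_Agr_0: "1 \<in> Agr 0"
proof -
  have "hcomp 1 0 * x = x" if "x \<in> Agr j" for x j
    using hcomp_mult_homogeneous[OF that, of 1 j] hcomp_homogeneous[OF that] by simp
  then have "hcomp 1 0 * a = a" for a
    by (metis (no_types, lifting) hcomp_mem_Agr sum.cong sum_distrib_left sum_hcomp)
  from this[of 1] show ?thesis using hcomp_mem_Agr[of 1 0] by simp
qed

lemma hcomp_one: "hcomp 1 i = (if i = 0 then 1 else 0)"
  using hcomp_homogeneous[OF one_mem_Agr_0] .

lemma scale_one_mem_Agr_0: "scale c 1 \<in> Agr 0"
  by (rule scale_mem_Agr[OF one_mem_Agr_0])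

lemma power_mem_Agr: "x \<in> Agr 1 \<Longrightarrow> x ^ k \<in> Agr k"
  by (induction k) (auto simp: one_mem_Agr_0 dest: mult_mem_Agr)

lemma degree_one_nilpotent: "x \<in> Agr 1 \<Longrightarrow> x ^ Suc top_deg = 0"
  using power_mem_Agr[of x "Suc top_deg"] Agr_above_top_deg[of "Suc top_deg"] by auto

lemma mult_defect_mem_if_homogeneous:
  fixes \<psi> :: "'a \<Rightarrow> 'b::comm_ring_1"
  assumes I: "is_ideal I" and add: "\<And>x y. \<psi> (x + y) = \<psi> x + \<psi> y"
    and homogeneous: "\<And>i j x y. x \<in> Agr i \<Longrightarrow> y \<in> Agr j \<Longrightarrow> \<psi> (x * y) - \<psi> x * \<psi> y \<in> I"
  shows "\<psi> (x * y) - \<psi> x * \<psi> y \<in> I"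
proof -
  have zero: "\<psi> 0 = 0" using add[of 0 0] by simp
  have sum: "\<psi> (sum f S) = (\<Sum>s\<in>S. \<psi> (f s))" for f :: "nat \<Rightarrow> 'a" and S
    by (induction S rule: infinite_finite_induct) (simp_all add: zero add)
  have sum_hcomps: "\<psi> a = (\<Sum>i\<le>top_deg. \<psi> (hcomp a i))" for a
    using sum[of "hcomp a" "{..top_deg}"] by (simp add: sum_hcomp)
  have "x * y = (\<Sum>i\<le>top_deg. \<Sum>j\<le>top_deg. hcomp x i * hcomp y j)"
    by (simp add: sum_hcomp flip: sum_product)
  then have "\<psi> (x * y) - \<psi> x * \<psi> y =
      (\<Sum>i\<le>top_deg. \<Sum>j\<le>top_deg. \<psi> (hcomp x i * hcomp y j) - \<psi> (hcomp x i) * \<psi> (hcomp y j))"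
    by (subst (2 3) sum_hcomps) (simp add: sum sum_product sum_subtractf)
  also have "\<dots> \<in> I"
    by (intro is_ideal_sum[OF I] homogeneous[OF hcomp_mem_Agr hcomp_mem_Agr])
  finally show ?thesis .
qed

lemma mem_irrelevant_ideal_iff: "x \<in> irrelevant_ideal Agr \<longleftrightarrow> hcomp x 0 = 0"
proof
  assume "x \<in> irrelevant_ideal Agr"
  then obtain n f where f: "\<forall>i\<in>{1..n}. f i \<in> Agr i" and x: "x = (\<Sum>i=1..n. f i)"
    by (auto simp: irrelevant_ideal_def)
  show "hcomp x 0 = 0"
    unfolding x hcomp_sum using f by (auto intro!: sum.neutral simp: hcomp_homogeneous)
next
  assume "hcomp x 0 = 0"
  then have "x = (\<Sum>i=1..top_deg. hcomp x i)"
    using sum_hcomp[of x] by (simp add: atMost_atLeast0 sum.atLeast_Suc_atMost)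
  then show "x \<in> irrelevant_ideal Agr"
    unfolding irrelevant_ideal_def using hcomp_mem_Agr by blast
qed

lemma maximal_irrelevant_ideal: "maximal_ideal (irrelevant_ideal Agr)"
  using std_graded unfolding std_graded_def by blast

lemma irrelevant_ideal_eq: "irrelevant_ideal Agr = ideal_gen (Agr 1)"
  using std_graded unfolding std_graded_def by blast

lemma is_ideal_irrelevant_ideal: "is_ideal (irrelevant_ideal Agr)"
  using maximal_irrelevant_ideal by (simp add: maximal_ideal_def)

text \<open>\<open>A\<^sub>0 \<cong> A/M\<close> is a field, because \<open>M\<close> is maximal.\<close>
lemma degree_zero_inverse:
  assumes x: "x \<in> Agr 0" "x \<noteq> 0"
  obtains y where "y * x = 1"
proof -
  let ?M = "irrelevant_ideal Agr"
  define J where "J = {m + b * x | m b. m \<in> ?M}"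
  have M: "is_ideal ?M" by (rule is_ideal_irrelevant_ideal)
  have "is_ideal J" unfolding J_def using M by (rule is_ideal_add_multiples)
  moreover have "?M \<subseteq> J"
  proof
    fix m assume "m \<in> ?M"
    moreover have "m = m + 0 * x" by simp
    ultimately show "m \<in> J" unfolding J_def by blast
  qed
  ultimately have "J = ?M \<or> J = UNIV"
    using maximal_irrelevant_ideal by (simp add: maximal_ideal_def)
  moreover have "x = 0 + 1 * x" by simp
  then have "x \<in> J" unfolding J_def using is_ideal_zero[OF M] by blast
  moreover have "x \<notin> ?M" using x by (simp add: mem_irrelevant_ideal_iff hcomp_homogeneous)
  ultimately have "1 \<in> J" by auto
  then obtain m b where "1 = m + b * x" "m \<in> ?M" by (auto simp: J_def)
  then have "hcomp b 0 * x = 1"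
    using hcomp_add[of m "b * x" 0] hcomp_one hcomp_mult_homogeneous[OF x(1)]
    by (simp add: mem_irrelevant_ideal_iff)
  then show ?thesis by (rule that)
qed

lemma degree_zero_no_zero_divisors:
  assumes "x \<in> Agr 0" and "x * y = 0"
  shows "x = 0 \<or> y = 0"
proof (cases "x = 0")
  case False
  then obtain z where "z * x = 1" using degree_zero_inverse[OF assms(1)] by blast
  then have "y = z * (x * y)" by (simp flip: mult.assoc)
  then show ?thesis using assms(2) by simp
qed simp

definition eval_poly :: "'k poly \<Rightarrow> 'a \<Rightarrow> 'a" where
  "eval_poly p x = poly (map_poly (\<lambda>c. scale c 1) p) x"

lemma eval_poly_0 [simp]: "eval_poly 0 x = 0"
  by (simp add: eval_poly_def)

lemma eval_poly_const: "eval_poly [:c:] x = scale c 1"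
  by (simp add: eval_poly_def map_poly_pCons)

lemma eval_poly_add: "eval_poly (p + q) x = eval_poly p x + eval_poly q x"
proof -
  have "map_poly (\<lambda>c. scale c 1) (p + q) = map_poly (\<lambda>c. scale c 1) p + map_poly (\<lambda>c. scale c 1) q"
    by (rule poly_eqI) (simp add: coeff_map_poly V.scale_left_distrib)
  then show ?thesis by (simp add: eval_poly_def)
qed

lemma eval_poly_smult: "eval_poly (smult c p) x = scale c 1 * eval_poly p x"
  unfolding eval_poly_def
  by (subst map_poly_smult[where f = "\<lambda>c. scale c 1"]) (simp_all add: scale_one_mult)

lemma eval_poly_linear_factor: "eval_poly ([:- c, 1:] * q) x = (x - scale c 1) * eval_poly q x"
proof -
  have "[:- c, 1:] * q = smult (- c) q + pCons 0 q" by simp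
  then show ?thesis
    by (simp only: eval_poly_add eval_poly_smult)
      (simp add: eval_poly_def map_poly_pCons algebra_simps)
qed

lemma eval_poly_monom: "eval_poly (monom c n) x = scale c (x ^ n)"
  by (simp add: eval_poly_def map_poly_monom poly_monom flip: scale_eq_mult)

lemma eval_poly_sum: "eval_poly (sum f S) x = (\<Sum>s\<in>S. eval_poly (f s) x)"
  by (induction S rule: infinite_finite_induct) (auto simp: eval_poly_add)

text \<open>Finite dimension: the powers \<open>x\<^sup>0, \<dots>, x\<^sup>n\<close>, \<open>n = card B\<close>, cannot be independent.\<close>
lemma annihilating_poly_exists:
  assumes "finite_dim scale"
  obtains p where "p \<noteq> 0" and "eval_poly p x = 0"
proof -
  obtain B where B: "finite B" "V.span B = UNIV"
    using assms by (auto simp: finite_dim_def)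
  let ?n = "card B"
  show ?thesis
  proof (cases "inj_on (\<lambda>i. x ^ i) {..?n}")
    case False
    then obtain i j where "i \<noteq> j" "x ^ i = x ^ j" by (auto simp: inj_on_def)
    moreover have "coeff (monom 1 i + monom (- 1) j :: 'k poly) i \<noteq> 0"
      using \<open>i \<noteq> j\<close> by simp
    then have "monom 1 i + monom (- 1) j \<noteq> (0 :: 'k poly)" by (rule contrapos_nn) simp
    ultimately show ?thesis
      by (intro that[of "monom 1 i + monom (- 1) j"]) (simp_all add: eval_poly_add eval_poly_monom)
  next
    case True
    let ?S = "(\<lambda>i. x ^ i) ` {..?n}"
    have "card ?S = Suc ?n" using card_image[OF True] by simp
    then have "\<not> V.independent ?S"
      using V.independent_span_bound[OF B(1), of ?S] B(2) by auto
    then obtain t u where t: "finite t" "t \<subseteq> ?S" "(\<Sum>v\<in>t. scale (u v) v) = 0" "\<exists>v\<in>t. u v \<noteq> 0"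
      unfolding V.dependent_explicit by blast
    define I where "I = {i. i \<le> ?n \<and> x ^ i \<in> t}"
    have t_eq: "t = (\<lambda>i. x ^ i) ` I" using t(2) by (auto simp: I_def)
    have inj: "inj_on (\<lambda>i. x ^ i) I" using True by (rule inj_on_subset) (auto simp: I_def)
    define p where "p = (\<Sum>i\<in>I. monom (u (x ^ i)) i)"
    have "finite I" by (simp add: I_def)
    then have coeff_p: "coeff p i = (if i \<in> I then u (x ^ i) else 0)" for i
      by (simp add: p_def coeff_sum)
    obtain i where "i \<in> I" "u (x ^ i) \<noteq> 0" using t(4) t_eq by blast
    then have "p \<noteq> 0" using coeff_p[of i] by auto
    moreover have "eval_poly p x = (\<Sum>v\<in>t. scale (u v) v)"
      unfolding t_eq sum.reindex[OF inj] by (simp add: p_def eval_poly_sum eval_poly_monom)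
    ultimately show ?thesis using t(3) that by simp
  qed
qed

text \<open>Split an annihilating polynomial into linear factors; one of them kills \<open>x\<close>, as \<open>A\<^sub>0\<close> is a domain.\<close>
lemma degree_zero_scalar_if_root:
  assumes alg_closed: "\<forall>p::'k poly. degree p > 0 \<longrightarrow> (\<exists>x. poly p x = 0)"
    and x: "x \<in> Agr 0"
  shows "p \<noteq> 0 \<Longrightarrow> eval_poly p x = 0 \<Longrightarrow> \<exists>c. x = scale c 1"
proof (induction "degree p" arbitrary: p rule: less_induct)
  case less
  show ?case
  proof (cases "degree p = 0")
    case True
    then obtain c where "p = [:c:]" by (rule degree_eq_zeroE)
    then show ?thesis using less.prems by (simp add: eval_poly_const)
  next
    case False
    then obtain c where "poly p c = 0" using alg_closed by auto
    then obtain q where q: "p = [:- c, 1:] * q" using poly_eq_0_iff_dvd by blast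
    with less.prems have "q \<noteq> 0" by auto
    then have "degree p = degree [:- c, 1:] + degree q"
      unfolding q by (intro degree_mult_eq) auto
    then have "degree q < degree p" by simp
    have "(x - scale c 1) * eval_poly q x = 0"
      using less.prems q eval_poly_linear_factor by simp
    then have "x - scale c 1 = 0 \<or> eval_poly q x = 0"
      using degree_zero_no_zero_divisors diff_mem_Agr[OF x scale_one_mem_Agr_0] by blast
    then show ?thesis
      using less.hyps[OF \<open>degree q < degree p\<close> \<open>q \<noteq> 0\<close>] by auto
  qed
qed

lemma degree_zero_scalar_if_alg_closed:
  assumes "\<forall>p::'k poly. degree p > 0 \<longrightarrow> (\<exists>x. poly p x = 0)" and "finite_dim scale"
    and "x \<in> Agr 0"
  shows "\<exists>c. x = scale c 1"
  using annihilating_poly_exists[OF assms(2), of x] degree_zero_scalar_if_root[OF assms(1,3)] by blast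

lemma degree_Suc_combination:
  assumes x: "x \<in> Agr (Suc i)"
  obtains L where "set L \<subseteq> Agr i \<times> Agr 1" and "x = (\<Sum>(b, l)\<leftarrow>L. b * l)"
proof -
  have "x \<in> irrelevant_ideal Agr"
    using x by (simp add: mem_irrelevant_ideal_iff hcomp_homogeneous)
  then have "x \<in> ideal_gen (Agr 1)" by (simp only: irrelevant_ideal_eq)
  then obtain L where L: "set L \<subseteq> UNIV \<times> Agr 1" "x = (\<Sum>(b, l)\<leftarrow>L. b * l)"
    by (rule mem_ideal_gen_combination)
  let ?L = "map (\<lambda>(b, l). (hcomp b i, l)) L"
  have "set ?L \<subseteq> Agr i \<times> Agr 1" using L(1) hcomp_mem_Agr by auto
  moreover have "hcomp (\<Sum>(b, l)\<leftarrow>L. b * l) (Suc i) = (\<Sum>(b, l)\<leftarrow>?L. b * l)"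
    using L(1) by (induction L) (auto simp: hcomp_add hcomp_mult_homogeneous)
  then have "x = (\<Sum>(b, l)\<leftarrow>?L. b * l)"
    using L(2) hcomp_homogeneous[OF x] by simp
  ultimately show ?thesis by (rule that)
qed

lemma crit_set_subset: "crit_set scale Agr \<subseteq> {..top_deg}"
proof
  fix i assume "i \<in> crit_set scale Agr"
  then obtain N and \<alpha> :: "'a \<Rightarrow> 'k poly"
    where dim: "quot_dim_ge2 (\<lambda>c. [:c:]) (trunc_ideal N) (\<alpha> ` Agr i)"
    unfolding crit_set_def by blast
  show "i \<in> {..top_deg}"
  proof (rule ccontr)
    assume "i \<notin> {..top_deg}"
    then have "Agr i = {0}" by (intro Agr_above_top_deg) simp
    then have "\<forall>c d. [:c:] * \<alpha> 0 + [:d:] * \<alpha> 0 \<in> trunc_ideal N \<longrightarrow> c = 0 \<and> d = 0"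
      using dim unfolding quot_dim_ge2_def by simp
    moreover have "[:1:] * \<alpha> 0 + [:- 1:] * \<alpha> 0 \<in> trunc_ideal N"
      using is_ideal_zero[OF is_ideal_trunc_ideal] by simp
    ultimately have "(1::'k) = 0" by blast
    then show False by simp
  qed
qed

lemma finite_crit_set: "finite (crit_set scale Agr)"
  using crit_set_subset by (rule finite_subset) simp

end

locale connected_graded_algebra = std_graded_algebra scale Agr
  for scale :: "'k::field \<Rightarrow> 'a::comm_ring_1 \<Rightarrow> 'a" and Agr +
  assumes Agr_0_scalar: "x \<in> Agr 0 \<Longrightarrow> \<exists>c. x = scale c 1"
begin

definition aug :: "'a \<Rightarrow> 'k" where
  "aug x = (THE c. hcomp x 0 = scale c 1)"

lemma aug_eqI: "hcomp x 0 = scale c 1 \<Longrightarrow> aug x = c"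
  unfolding aug_def by (rule the_equality) (auto intro: scale_one_inj)

lemma hcomp_0_eq_aug: "hcomp x 0 = scale (aug x) 1"
  using Agr_0_scalar[OF hcomp_mem_Agr] aug_eqI by blast

lemma aug_add: "aug (x + y) = aug x + aug y"
  by (rule aug_eqI) (simp add: hcomp_add hcomp_0_eq_aug[of x] hcomp_0_eq_aug[of y] V.scale_left_distrib)

lemma aug_scale: "aug (scale c x) = c * aug x"
  by (rule aug_eqI) (simp add: hcomp_scale hcomp_0_eq_aug[of x])

lemma aug_one: "aug 1 = 1"
  by (rule aug_eqI) (simp add: hcomp_one)

lemma aug_homogeneous: "x \<in> Agr i \<Longrightarrow> i \<noteq> 0 \<Longrightarrow> aug x = 0"
  by (rule aug_eqI) (simp add: hcomp_homogeneous)

lemma alg_hom_mod_if_homogeneous: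
  fixes \<psi> :: "'a \<Rightarrow> 'b::comm_ring_1"
  assumes I: "is_ideal I"
    and add: "\<And>x y. \<psi> (x + y) = \<psi> x + \<psi> y"
    and scale: "\<And>c x. \<psi> (scale c x) = emb c * \<psi> x"
    and one: "\<psi> 1 = 1"
    and mult: "\<And>i j x y. x \<in> Agr (Suc i) \<Longrightarrow> y \<in> Agr (Suc j) \<Longrightarrow> \<psi> (x * y) - \<psi> x * \<psi> y \<in> I"
  shows "alg_hom_mod scale emb I \<psi>"
proof -
  have degree_zero: "\<psi> (x * y) = \<psi> x * \<psi> y" if x: "x \<in> Agr 0" for x y
  proof -
    obtain c where "x = scale c 1" using Agr_0_scalar[OF x] by blast
    then show ?thesis using scale[of c y] scale[of c 1] one by (simp flip: scale_eq_mult)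
  qed
  have "\<psi> (x * y) - \<psi> x * \<psi> y \<in> I" if "x \<in> Agr i" "y \<in> Agr j" for i j x y
  proof (cases "i = 0 \<or> j = 0")
    case True
    then show ?thesis using that degree_zero[of x y] degree_zero[of y x] is_ideal_zero[OF I]
      by (auto simp: mult.commute)
  next
    case False
    then show ?thesis using that mult by (metis not0_implies_Suc)
  qed
  then have "\<psi> (x * y) - \<psi> x * \<psi> y \<in> I" for x y
    by (rule mult_defect_mem_if_homogeneous[of I \<psi>, OF I add])
  then show ?thesis
    unfolding alg_hom_mod_def using add scale one is_ideal_zero[OF I] by simp
qed

lemma scale_one_dvd_one: "c \<noteq> 0 \<Longrightarrow> scale c 1 dvd 1"
  using scale_one_mult[of c "inverse c"] by (auto intro: dvdI)

lemma principal_ideal_algebra_if_degree_one_cyclic: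
  assumes w: "w \<in> Agr 1" and cyclic: "\<And>x. x \<in> Agr 1 \<Longrightarrow> \<exists>c. x = scale c w"
  shows "principal_ideal_algebra TYPE('a)"
proof (rule principal_ideal_algebra_if_units_or_multiples)
  show nilpotent: "w ^ Suc top_deg = 0" by (rule degree_one_nilpotent[OF w])
  fix x
  have "Agr 1 \<subseteq> {a * w | a. True}"
    using cyclic by (force simp: scale_eq_mult[of _ w])
  then have "irrelevant_ideal Agr \<subseteq> {a * w | a. True}"
    unfolding irrelevant_ideal_eq by (rule ideal_gen_subset[OF is_ideal_multiples])
  moreover have "x - scale (aug x) 1 \<in> irrelevant_ideal Agr"
    by (simp add: mem_irrelevant_ideal_iff hcomp_diff hcomp_0_eq_aug[of x] hcomp_scale hcomp_one)
  ultimately obtain a where a: "x = scale (aug x) 1 + a * w"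
    by (force simp: algebra_simps)
  show "x dvd 1 \<or> w dvd x"
  proof (cases "aug x = 0")
    case True
    then show ?thesis using a by simp
  next
    case False
    let ?s = "scale (inverse (aug x)) 1 * a"
    have "(?s * w) ^ Suc top_deg = 0" by (simp only: power_mult_distrib nilpotent mult_zero_right)
    then have "scale (aug x) 1 * (1 + ?s * w) dvd 1 * 1"
      by (intro mult_dvd_mono scale_one_dvd_one[OF False] nilpotent_one_plus_is_unit)
    moreover have "scale (aug x) 1 * (1 + ?s * w) = x"
      using a False by (simp add: algebra_simps scale_one_mult)
    ultimately show ?thesis by simp
  qed
qed

lemma degree_one_independent_pair:
  assumes "\<not> principal_ideal_algebra TYPE('a)"
  obtains u v where "u \<in> Agr 1" and "v \<in> Agr 1"
    and "\<And>c d. scale c u + scale d v = 0 \<Longrightarrow> c = 0 \<and> d = 0"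
proof -
  have "\<exists>u\<in>Agr 1. \<exists>v\<in>Agr 1. \<forall>c d. scale c u + scale d v = 0 \<longrightarrow> c = 0 \<and> d = 0"
  proof (rule ccontr)
    assume dependent: "\<not> ?thesis"
    show False
    proof (cases "\<exists>w\<in>Agr 1. w \<noteq> 0")
      case False
      then have "principal_ideal_algebra TYPE('a)"
        by (intro principal_ideal_algebra_if_degree_one_cyclic[OF zero_mem_Agr]) auto
      then show False using assms by simp
    next
      case True
      then obtain w where w: "w \<in> Agr 1" "w \<noteq> 0" by blast
      have "\<exists>c. x = scale c w" if x: "x \<in> Agr 1" for x
      proof -
        obtain c d where cd: "scale c w + scale d x = 0" "c \<noteq> 0 \<or> d \<noteq> 0"
          using dependent w(1) x by blast
        then have "d \<noteq> 0" using w(2) by auto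
        have "scale d x = - scale c w"
          using cd(1) by (simp add: eq_neg_iff_add_eq_0 add.commute)
        then have "scale (inverse d) (scale d x) = scale (inverse d) (- scale c w)" by simp
        then have "x = scale (- (inverse d * c)) w" using \<open>d \<noteq> 0\<close> by simp
        then show ?thesis by blast
      qed
      then have "principal_ideal_algebra TYPE('a)"
        by (rule principal_ideal_algebra_if_degree_one_cyclic[OF w(1)])
      then show False using assms by simp
    qed
  qed
  then show ?thesis using that by blast
qed

text \<open>Placing \<open>A\<^sub>1\<close> in \<open>t\<close>-degrees 2 and 3 makes all products of positive-degree elements
  vanish modulo \<open>t\<^sup>4\<close>.\<close>
lemma alg_hom_mod_degree_one_functionals:
  assumes f: "module_hom scale (*) f" and g: "module_hom scale (*) g"
  shows "alg_hom_mod scale (\<lambda>c. [:c:]) (trunc_ideal 3)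
           (\<lambda>x. [:aug x, 0, f (hcomp x 1), g (hcomp x 1):])"
proof (rule alg_hom_mod_if_homogeneous[OF is_ideal_trunc_ideal])
  interpret f: module_hom scale "(*)" f by (rule f)
  interpret g: module_hom scale "(*)" g by (rule g)
  show "[:aug (x + y), 0, f (hcomp (x + y) 1), g (hcomp (x + y) 1):] =
      [:aug x, 0, f (hcomp x 1), g (hcomp x 1):] + [:aug y, 0, f (hcomp y 1), g (hcomp y 1):]" for x y
    by (simp add: aug_add hcomp_add f.add g.add)
  show "[:aug (scale c x), 0, f (hcomp (scale c x) 1), g (hcomp (scale c x) 1):] =
      [:c:] * [:aug x, 0, f (hcomp x 1), g (hcomp x 1):]" for c x
    by (simp add: aug_scale hcomp_scale f.scale g.scale)
  show "[:aug 1, 0, f (hcomp 1 1), g (hcomp 1 1):] = 1"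
    by (simp add: aug_one hcomp_one one_pCons)
  fix i j x y assume x: "x \<in> Agr (Suc i)" and y: "y \<in> Agr (Suc j)"
  have positive: "[:aug z, 0, f (hcomp z 1), g (hcomp z 1):] = monom 1 2 * [:f (hcomp z 1), g (hcomp z 1):]"
    if "z \<in> Agr (Suc k)" for z k
    using aug_homogeneous[OF that] by (simp add: numeral_2_eq_2 monom_Suc)
  have product: "monom 1 2 * A * (monom 1 2 * B) = monom 1 4 * (A * B)" for A B :: "'k poly"
    by (simp add: mult_monom mult_ac)
  have "x * y \<in> Agr (Suc (Suc (i + j)))" using mult_mem_Agr[OF x y] by simp
  then have "[:aug (x * y), 0, f (hcomp (x * y) 1), g (hcomp (x * y) 1):] = 0"
    using aug_homogeneous by (simp add: hcomp_homogeneous)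
  moreover have "eq_upto 3 ([:aug x, 0, f (hcomp x 1), g (hcomp x 1):] * [:aug y, 0, f (hcomp y 1), g (hcomp y 1):]) 0"
    unfolding positive[OF x] positive[OF y] product by (rule eq_upto_monom_mult_0) simp
  ultimately show "[:aug (x * y), 0, f (hcomp (x * y) 1), g (hcomp (x * y) 1):] -
      [:aug x, 0, f (hcomp x 1), g (hcomp x 1):] * [:aug y, 0, f (hcomp y 1), g (hcomp y 1):] \<in> trunc_ideal 3"
    by (metis diff_mem_trunc_ideal_iff eq_upto_sym)
qed

lemma one_mem_crit_set:
  assumes u: "u \<in> Agr 1" and v: "v \<in> Agr 1"
    and independent: "\<And>c d. scale c u + scale d v = 0 \<Longrightarrow> c = 0 \<and> d = 0"
  shows "1 \<in> crit_set scale Agr"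
proof -
  interpret vector_space_pair scale "(*) :: 'k \<Rightarrow> 'k \<Rightarrow> 'k"
    by unfold_locales (simp_all add: algebra_simps)
  have "u \<noteq> v" using independent[of 1 "- 1"] by auto
  have "v \<noteq> 0" using independent[of 0 1] by auto
  have "u \<notin> V.span {v}"
    using independent[of 1 "- k" for k] by (auto simp: V.span_singleton)
  then have "V.independent {u, v}"
    using \<open>v \<noteq> 0\<close> by (intro V.independent_insertI) (auto simp: V.independent_insert V.independent_empty)
  then obtain f g where f: "module_hom scale (*) f" "f u = 1" "f v = 0"
    and g: "module_hom scale (*) g" "g u = 0" "g v = 1"
    using linear_independent_extend[of "{u, v}" "\<lambda>x. if x = u then 1 else 0"]
      linear_independent_extend[of "{u, v}" "\<lambda>x. if x = v then 1 else 0"] \<open>u \<noteq> v\<close>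
    by (auto simp: module_hom_iff_linear)
  define \<alpha> where "\<alpha> x = [:aug x, 0, f (hcomp x 1), g (hcomp x 1):]" for x
  have "hcomp u 1 = u" "hcomp v 1 = v"
    by (subst hcomp_homogeneous[OF u] hcomp_homogeneous[OF v], simp)+
  then have "\<alpha> u = [:0, 0, 1, 0:]" "\<alpha> v = [:0, 0, 0, 1:]"
    using f g aug_homogeneous[OF u] aug_homogeneous[OF v] by (simp_all add: \<alpha>_def)
  then have combination: "[:c:] * \<alpha> u + [:d:] * \<alpha> v = [:0, 0, c, d:]" for c d
    by simp
  have "quot_dim_ge2 (\<lambda>c. [:c:]) (trunc_ideal 3) (\<alpha> ` Agr 1)"
    unfolding quot_dim_ge2_def
  proof (intro bexI allI impI)
    fix c d assume "[:c:] * \<alpha> u + [:d:] * \<alpha> v \<in> trunc_ideal 3"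
    then have "eq_upto 3 [:0, 0, c, d:] 0" by (simp only: combination mem_trunc_ideal_iff)
    from eq_upto_coeff[OF this, of 2] eq_upto_coeff[OF this, of 3] show "c = 0 \<and> d = 0"
      by (simp add: numeral_2_eq_2 numeral_3_eq_3)
  qed (rule imageI, fact)+
  moreover have "alg_hom_mod scale (\<lambda>c. [:c:]) (trunc_ideal 3) \<alpha>"
    unfolding \<alpha>_def using f(1) g(1) by (rule alg_hom_mod_degree_one_functionals)
  ultimately show ?thesis unfolding crit_set_def by (intro CollectI exI conjI)
qed

end

section \<open>A surjection onto \<open>Q(r)\<close> for every \<open>r \<in> \<E>\<close>\<close>

locale crit_witness = connected_graded_algebra scale Agr
  for scale :: "'k::field \<Rightarrow> 'a::comm_ring_1 \<Rightarrow> 'a" and Agr +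
  fixes \<alpha> :: "'a \<Rightarrow> 'k poly" and N r :: nat and u v :: 'a
  assumes alg_hom: "alg_hom_mod scale (\<lambda>c. [:c:]) (trunc_ideal N) \<alpha>"
    and u: "u \<in> Agr r" and v: "v \<in> Agr r"
    and independent: "\<And>c d. [:c:] * \<alpha> u + [:d:] * \<alpha> v \<in> trunc_ideal N \<Longrightarrow> c = 0 \<and> d = 0"
begin

lemma alpha_add: "eq_upto N (\<alpha> (x + y)) (\<alpha> x + \<alpha> y)"
  using alg_hom by (simp add: alg_hom_mod_def diff_mem_trunc_ideal_iff)

lemma alpha_scale: "eq_upto N (\<alpha> (scale c x)) (smult c (\<alpha> x))"
  using alg_hom by (simp add: alg_hom_mod_def diff_mem_trunc_ideal_iff)

lemma alpha_mult: "eq_upto N (\<alpha> (x * y)) (\<alpha> x * \<alpha> y)"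
  using alg_hom by (simp add: alg_hom_mod_def diff_mem_trunc_ideal_iff)

lemma alpha_one: "eq_upto N (\<alpha> 1) 1"
  using alg_hom by (simp add: alg_hom_mod_def diff_mem_trunc_ideal_iff)

lemma alpha_zero: "eq_upto N (\<alpha> 0) 0"
  using alpha_scale[of 0 0] by simp

lemma alpha_scalar: "eq_upto N (\<alpha> (scale c 1)) [:c:]"
  using eq_upto_trans[OF alpha_scale eq_upto_smult[OF alpha_one]] by simp

lemma alpha_combination: "eq_upto N (\<alpha> (\<Sum>(b, l)\<leftarrow>L. b * l)) (\<Sum>(b, l)\<leftarrow>L. \<alpha> b * \<alpha> l)"
proof (induction L)
  case Nil
  then show ?case using alpha_zero by simp
next
  case (Cons bl L)
  obtain b l where "bl = (b, l)" by fastforce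
  then show ?case
    using eq_upto_trans[OF alpha_add eq_upto_add[OF alpha_mult Cons.IH]] by simp
qed

lemma independent_eq_upto: "eq_upto N (smult c (\<alpha> u) + smult d (\<alpha> v)) 0 \<Longrightarrow> c = 0 \<and> d = 0"
  using independent by (simp add: mem_trunc_ideal_iff)

lemma alpha_u_nonzero: "\<not> eq_upto N (\<alpha> u) 0"
  using independent_eq_upto[of 1 0] by auto

lemma r_pos: "0 < r"
proof (rule ccontr)
  assume "\<not> 0 < r"
  then have "u \<in> Agr 0" "v \<in> Agr 0" using u v by simp_all
  then obtain c d where c: "u = scale c 1" and "v = scale d 1" using Agr_0_scalar by blast
  then have "eq_upto N (\<alpha> u) [:c:]" "eq_upto N (\<alpha> v) [:d:]" using alpha_scalar by auto
  then have "eq_upto N (smult d (\<alpha> u) + smult (- c) (\<alpha> v)) (smult d [:c:] + smult (- c) [:d:])"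
    by (intro eq_upto_add eq_upto_smult)
  then have "eq_upto N (smult d (\<alpha> u) + smult (- c) (\<alpha> v)) 0" by (simp add: mult.commute)
  then have "c = 0" using independent_eq_upto[of d "- c"] by simp
  then show False using alpha_u_nonzero alpha_zero c by simp
qed

lemma alpha_degree_one_nonzero: "\<exists>l\<in>Agr 1. \<exists>k\<le>N. coeff (\<alpha> l) k \<noteq> 0"
proof (rule ccontr)
  assume "\<not> ?thesis"
  then have zero: "eq_upto N (\<alpha> l) 0" if "l \<in> Agr 1" for l
    using that by (auto simp: eq_upto_def)
  obtain L where L: "set L \<subseteq> Agr (r - 1) \<times> Agr 1" "u = (\<Sum>(b, l)\<leftarrow>L. b * l)"
    using degree_Suc_combination[of u "r - 1"] u r_pos by auto
  have "eq_upto N (\<Sum>(b, l)\<leftarrow>L. \<alpha> b * \<alpha> l) 0"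
    by (rule eq_upto_sum_list_0) (use L(1) zero eq_upto_mult_left in \<open>fastforce split: prod.splits\<close>)
  then have "eq_upto N (\<alpha> u) 0"
    using eq_upto_trans[OF alpha_combination] L(2) by simp
  then show False using alpha_u_nonzero by simp
qed

definition lowest :: nat where
  "lowest = (LEAST k. k \<le> N \<and> (\<exists>l\<in>Agr 1. coeff (\<alpha> l) k \<noteq> 0))"

lemma lowest_le: "lowest \<le> N" and lowest_attained: "\<exists>l\<in>Agr 1. coeff (\<alpha> l) lowest \<noteq> 0"
  using LeastI_ex[of "\<lambda>k. k \<le> N \<and> (\<exists>l\<in>Agr 1. coeff (\<alpha> l) k \<noteq> 0)"] alpha_degree_one_nonzero
  unfolding lowest_def by blast+

lemma below_lowest: "l \<in> Agr 1 \<Longrightarrow> k < lowest \<Longrightarrow> coeff (\<alpha> l) k = 0"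
  using not_less_Least[of k "\<lambda>k. k \<le> N \<and> (\<exists>l\<in>Agr 1. coeff (\<alpha> l) k \<noteq> 0)"] lowest_le
  unfolding lowest_def by auto

definition l0 :: 'a where
  "l0 = (SOME l. l \<in> Agr 1 \<and> coeff (\<alpha> l) lowest = 1)"

lemma l0: "l0 \<in> Agr 1" "coeff (\<alpha> l0) lowest = 1"
proof -
  obtain l where l: "l \<in> Agr 1" "coeff (\<alpha> l) lowest \<noteq> 0" using lowest_attained by blast
  have "coeff (\<alpha> (scale (inverse (coeff (\<alpha> l) lowest)) l)) lowest = 1"
    using eq_upto_coeff[OF alpha_scale lowest_le] l(2) by simp
  then have "\<exists>l. l \<in> Agr 1 \<and> coeff (\<alpha> l) lowest = 1" using scale_mem_Agr l(1) by blast
  then show "l0 \<in> Agr 1" "coeff (\<alpha> l0) lowest = 1"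
    unfolding l0_def by (metis (mono_tags, lifting) someI_ex)+
qed

definition unit_part :: "'k poly" where
  "unit_part = poly_shift lowest (\<alpha> l0)"

lemma alpha_l0: "eq_upto N (\<alpha> l0) (monom 1 lowest * unit_part)"
  unfolding eq_upto_def coeff_monom_mult unit_part_def coeff_poly_shift
  using below_lowest[OF l0(1)] by auto

definition unit_part_inv :: "'k poly" where
  "unit_part_inv = (SOME h. eq_upto N (unit_part * h) 1)"

lemma unit_part_inv: "eq_upto N (unit_part * unit_part_inv) 1"
proof -
  have "coeff unit_part 0 = 1" using l0 by (simp add: unit_part_def coeff_poly_shift)
  then obtain h where "eq_upto N (unit_part * h) 1" by (rule eq_upto_inverse_exists)
  then show ?thesis unfolding unit_part_inv_def by (rule someI)
qed

text \<open>\<open>normal i z \<equiv> t\<^bsup>lowest \<cdot> i\<^esup> \<alpha>(z) / \<alpha>(l0)\<^sup>i\<close>, so \<open>normal i (l0\<^sup>i) \<equiv> t\<^bsup>lowest \<cdot> i\<^esup>\<close>.\<close>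
definition normal :: "nat \<Rightarrow> 'a \<Rightarrow> 'k poly" where
  "normal i z = unit_part_inv ^ i * \<alpha> z"

lemma normal_add: "eq_upto N (normal i (z + w)) (normal i z + normal i w)"
  unfolding normal_def distrib_left[symmetric] by (rule eq_upto_mult_left[OF alpha_add])

lemma normal_scale: "eq_upto N (normal i (scale c z)) (smult c (normal i z))"
  unfolding normal_def mult_smult_right[symmetric] by (rule eq_upto_mult_left[OF alpha_scale])

lemma normal_mult: "eq_upto N (normal (i + j) (x * y)) (normal i x * normal j y)"
proof -
  have "normal i x * normal j y = unit_part_inv ^ (i + j) * (\<alpha> x * \<alpha> y)"
    by (simp add: normal_def power_add algebra_simps)
  then show ?thesis unfolding normal_def by (metis eq_upto_mult_left[OF alpha_mult])
qed

lemma normal_combination: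
  "eq_upto N (normal (Suc i) (\<Sum>(b, l)\<leftarrow>L. b * l)) (\<Sum>(b, l)\<leftarrow>L. normal i b * normal 1 l)"
proof -
  have "(\<Sum>(b, l)\<leftarrow>L. normal i b * normal 1 l) = unit_part_inv ^ Suc i * (\<Sum>(b, l)\<leftarrow>L. \<alpha> b * \<alpha> l)"
    by (induction L) (auto simp: normal_def algebra_simps)
  then show ?thesis unfolding normal_def by (simp add: eq_upto_mult_left[OF alpha_combination])
qed

lemma alpha_eq_normal: "eq_upto N (\<alpha> z) (unit_part ^ i * normal i z)"
proof -
  have "eq_upto N ((unit_part * unit_part_inv) ^ i * \<alpha> z) (1 ^ i * \<alpha> z)"
    by (intro eq_upto_mult eq_upto_power unit_part_inv eq_upto_refl)
  then show ?thesis by (simp add: normal_def power_mult_distrib mult.assoc eq_upto_sym)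
qed

lemma normal_l0: "eq_upto N (normal 1 l0) (monom 1 lowest)"
proof -
  have "eq_upto N (normal 1 l0) (monom 1 lowest * (unit_part * unit_part_inv))"
    using eq_upto_mult_left[OF alpha_l0, of unit_part_inv] by (simp add: normal_def algebra_simps)
  also have "eq_upto N \<dots> (monom 1 lowest * 1)"
    by (rule eq_upto_mult_left[OF unit_part_inv])
  finally show ?thesis by simp
qed

text \<open>The disjunct \<open>N < lowest + m\<close> only makes the minimum exist; \<open>gap_below_truncation\<close> rules
  it out.\<close>
definition gap :: nat where
  "gap = (LEAST m. 0 < m \<and> (N < lowest + m \<or> (\<exists>l\<in>Agr 1. coeff (normal 1 l) (lowest + m) \<noteq> 0)))"

lemma gap_pos: "0 < gap"
  and gap_attained: "N < lowest + gap \<or> (\<exists>l\<in>Agr 1. coeff (normal 1 l) (lowest + gap) \<noteq> 0)"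
  using LeastI[of "\<lambda>m. 0 < m \<and> (N < lowest + m \<or> (\<exists>l\<in>Agr 1. coeff (normal 1 l) (lowest + m) \<noteq> 0))" "Suc N"]
  unfolding gap_def by auto

lemma below_gap: "0 < m \<Longrightarrow> m < gap \<Longrightarrow> lowest + m \<le> N \<Longrightarrow> l \<in> Agr 1 \<Longrightarrow> coeff (normal 1 l) (lowest + m) = 0"
  using not_less_Least[of m "\<lambda>m. 0 < m \<and> (N < lowest + m \<or> (\<exists>l\<in>Agr 1. coeff (normal 1 l) (lowest + m) \<noteq> 0))"]
  unfolding gap_def by auto

lemma gapped_normal_degree_one:
  assumes l: "l \<in> Agr 1"
  shows "gapped N gap lowest (normal 1 l)"
proof (rule gappedI)
  fix k assume k: "k \<le> N" "k \<noteq> lowest" "k < lowest + gap"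
  show "coeff (normal 1 l) k = 0"
  proof (cases "k < lowest")
    case True
    then show ?thesis
      by (auto simp: normal_def coeff_mult below_lowest[OF l] intro!: sum.neutral)
  next
    case False
    then show ?thesis using below_gap[of "k - lowest" l] l k by simp
  qed
qed

lemma gapped_normal:
  assumes "0 < i" and "z \<in> Agr i"
  shows "gapped N gap (lowest * i) (normal i z)"
  using assms
proof (induction i arbitrary: z rule: nat_induct_non_zero)
  case 1
  then show ?case using gapped_normal_degree_one by simp
next
  case (Suc i)
  obtain L where L: "set L \<subseteq> Agr i \<times> Agr 1" "z = (\<Sum>(b, l)\<leftarrow>L. b * l)"
    using degree_Suc_combination Suc.prems by blast
  have "gapped N gap (lowest * i + lowest) (normal i b * normal 1 l)" if "(b, l) \<in> set L" for b l
    using that L(1) by (intro gapped_mult Suc.IH gapped_normal_degree_one) auto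
  then have "gapped N gap (lowest * i + lowest) (\<Sum>(b, l)\<leftarrow>L. normal i b * normal 1 l)"
    by (intro gapped_sum_list) auto
  then show ?case
    using gapped_eq_upto[OF normal_combination] L(2) by (simp add: algebra_simps)
qed

lemma coeff_normal_mult:
  assumes "0 < i" "0 < j" and x: "x \<in> Agr i" and y: "y \<in> Agr j"
    and N: "lowest * (i + j) + gap \<le> N"
  shows "coeff (normal (i + j) (x * y)) (lowest * (i + j)) =
      coeff (normal i x) (lowest * i) * coeff (normal j y) (lowest * j)"
    and "coeff (normal (i + j) (x * y)) (lowest * (i + j) + gap) =
      coeff (normal i x) (lowest * i) * coeff (normal j y) (lowest * j + gap) +
      coeff (normal i x) (lowest * i + gap) * coeff (normal j y) (lowest * j)"
proof -
  have x': "gapped N gap (lowest * i) (normal i x)" and y': "gapped N gap (lowest * j) (normal j y)"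
    using gapped_normal assms by auto
  have "coeff (normal (i + j) (x * y)) (lowest * (i + j)) = coeff (normal i x * normal j y) (lowest * i + lowest * j)"
    using eq_upto_coeff[OF normal_mult, of "lowest * (i + j)"] N by (simp add: algebra_simps)
  then show "coeff (normal (i + j) (x * y)) (lowest * (i + j)) =
      coeff (normal i x) (lowest * i) * coeff (normal j y) (lowest * j)"
    using coeff_mult_gapped_lowest[OF x' y'] N by (simp add: algebra_simps)
  have "coeff (normal (i + j) (x * y)) (lowest * (i + j) + gap) =
      coeff (normal i x * normal j y) (lowest * i + lowest * j + gap)"
    using eq_upto_coeff[OF normal_mult N] by (simp add: algebra_simps)
  then show "coeff (normal (i + j) (x * y)) (lowest * (i + j) + gap) =
      coeff (normal i x) (lowest * i) * coeff (normal j y) (lowest * j + gap) +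
      coeff (normal i x) (lowest * i + gap) * coeff (normal j y) (lowest * j)"
    using coeff_mult_gapped_next[OF x' y' _ gap_pos] N by (simp add: algebra_simps)
qed

text \<open>Otherwise each \<open>normal r z\<close>, \<open>z \<in> A\<^sub>r\<close>, would be a multiple of \<open>t\<^bsup>lowest \<cdot> r\<^esup>\<close> up to
  degree \<open>N\<close>, and \<open>\<alpha>(A\<^sub>r)\<close> would be one-dimensional.\<close>
lemma gap_below_truncation: "lowest * r + gap \<le> N"
proof (rule ccontr)
  assume "\<not> ?thesis"
  then have single: "coeff (normal r z) k = 0" if "z \<in> Agr r" "k \<le> N" "k \<noteq> lowest * r" for z k
    using gappedD[OF gapped_normal[OF r_pos that(1)]] that by auto
  define p q where "p = coeff (normal r u) (lowest * r)" and "q = coeff (normal r v) (lowest * r)"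
  have "eq_upto N (smult q (normal r u) - smult p (normal r v)) 0"
    unfolding eq_upto_def
  proof (intro allI impI)
    fix k assume "k \<le> N"
    then show "coeff (smult q (normal r u) - smult p (normal r v)) k = coeff 0 k"
      by (cases "k = lowest * r") (simp_all add: single u v p_def q_def)
  qed
  then have "eq_upto N (unit_part ^ r * (smult q (normal r u) - smult p (normal r v))) 0"
    using eq_upto_mult_left by fastforce
  moreover have "eq_upto N (smult q (\<alpha> u) + smult (- p) (\<alpha> v))
      (smult q (unit_part ^ r * normal r u) + smult (- p) (unit_part ^ r * normal r v))"
    by (intro eq_upto_add eq_upto_smult alpha_eq_normal)
  ultimately have "eq_upto N (smult q (\<alpha> u) + smult (- p) (\<alpha> v)) 0"
    by (auto simp: algebra_simps intro: eq_upto_trans)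
  then have "p = 0" using independent_eq_upto[of q "- p"] by simp
  then have "eq_upto N (normal r u) 0"
    using single u by (auto simp: eq_upto_def p_def)
  then have "eq_upto N (unit_part ^ r * normal r u) 0"
    using eq_upto_mult_left by fastforce
  then show False
    using alpha_u_nonzero eq_upto_trans[OF alpha_eq_normal] by blast
qed

lemma gap_below_truncation_le: "i \<le> r \<Longrightarrow> lowest * i + gap \<le> N"
  using gap_below_truncation by (meson add_le_mono1 le_trans mult_le_mono2)

lemma gap_attained_degree_one: "\<exists>l\<in>Agr 1. coeff (normal 1 l) (lowest + gap) \<noteq> 0"
  using gap_attained gap_below_truncation_le[of 1] r_pos by simp

definition phi_deg :: "nat \<Rightarrow> 'a \<Rightarrow> 'k poly poly" where
  "phi_deg i z = Q_monomial i (coeff (normal i z) (lowest * i)) (coeff (normal i z) (lowest * i + gap))"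

definition phi :: "'a \<Rightarrow> 'k poly poly" where
  "phi x = (\<Sum>i\<le>r. phi_deg i (hcomp x i))"

lemma phi_deg_add: "i \<le> r \<Longrightarrow> phi_deg i (z + w) = phi_deg i z + phi_deg i w"
  using gap_below_truncation_le[of i]
  by (simp add: phi_deg_def eq_upto_coeff[OF normal_add] Q_monomial_add)

lemma phi_deg_scale: "i \<le> r \<Longrightarrow> phi_deg i (scale c z) = [:[:c:]:] * phi_deg i z"
  using gap_below_truncation_le[of i]
  by (simp add: phi_deg_def eq_upto_coeff[OF normal_scale] Q_monomial_mult_const)

lemma phi_deg_zero: "i \<le> r \<Longrightarrow> phi_deg i 0 = 0"
  using phi_deg_scale[of i 0 0] by simp

lemma phi_homogeneous: "z \<in> Agr d \<Longrightarrow> phi z = (if d \<le> r then phi_deg d z else 0)"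
  by (simp add: phi_def hcomp_homogeneous phi_deg_zero if_distrib[of "phi_deg _"] cong: if_cong)

lemma phi_add: "phi (x + y) = phi x + phi y"
  by (simp add: phi_def hcomp_add phi_deg_add sum.distrib)

lemma phi_scale: "phi (scale c x) = [:[:c:]:] * phi x"
  by (simp add: phi_def hcomp_scale phi_deg_scale sum_distrib_left)

lemma phi_diff: "phi (x - y) = phi x - phi y"
  using phi_add[of "x - y" y] by simp

lemma phi_one: "phi 1 = 1"
proof -
  have "coeff (normal 0 1) 0 = 1" "coeff (normal 0 1) gap = 0"
    using eq_upto_coeff[OF alpha_one] gap_below_truncation_le[of 0] gap_pos by (simp_all add: normal_def)
  then show ?thesis
    using phi_homogeneous[OF one_mem_Agr_0] by (simp add: phi_deg_def Q_monomial_def pCons_one)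
qed

lemma phi_mult_positive_degrees:
  assumes x: "x \<in> Agr (Suc i)" and y: "y \<in> Agr (Suc j)"
  shows "phi (x * y) - phi x * phi y \<in> Q_ideal r"
proof -
  have xy: "x * y \<in> Agr (Suc i + Suc j)" using mult_mem_Agr[OF x y] .
  define p q p' q' where "p = coeff (normal (Suc i) x) (lowest * Suc i)"
    and "q = coeff (normal (Suc i) x) (lowest * Suc i + gap)"
    and "p' = coeff (normal (Suc j) y) (lowest * Suc j)"
    and "q' = coeff (normal (Suc j) y) (lowest * Suc j + gap)"
  show ?thesis
  proof (cases "Suc i + Suc j \<le> r")
    case True
    then have "phi (x * y) = Q_monomial (Suc i + Suc j) (p * p') (p * q' + q * p')"
      using phi_homogeneous[OF xy] coeff_normal_mult[OF _ _ x y gap_below_truncation_le[OF True]]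
      by (simp add: phi_deg_def p_def q_def p'_def q'_def)
    moreover have "phi x * phi y = Q_monomial (Suc i) p q * Q_monomial (Suc j) p' q'"
      using True phi_homogeneous[OF x] phi_homogeneous[OF y]
      by (simp add: phi_deg_def p_def q_def p'_def q'_def)
    ultimately show ?thesis
      using is_ideal_uminus[OF is_ideal_Q_ideal Q_monomial_mult] by simp
  next
    case False
    then have "phi (x * y) = 0" using phi_homogeneous[OF xy] by simp
    moreover have "phi x * phi y \<in> Q_ideal r"
    proof (cases "Suc i \<le> r \<and> Suc j \<le> r")
      case True
      then have "phi x * phi y = Q_monomial (Suc i) p q * Q_monomial (Suc j) p' q'"
        using phi_homogeneous[OF x] phi_homogeneous[OF y]
        by (simp add: phi_deg_def p_def q_def p'_def q'_def)
      moreover have "r < Suc i + Suc j" using \<open>\<not> Suc i + Suc j \<le> r\<close> by simp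
      ultimately show ?thesis using Q_monomial_mult_mem_Q_ideal by simp
    next
      case False
      then have "phi x * phi y = 0"
        using phi_homogeneous[OF x] phi_homogeneous[OF y] by auto
      then show ?thesis by (metis is_ideal_zero is_ideal_Q_ideal)
    qed
    ultimately show ?thesis
      using is_ideal_uminus[OF is_ideal_Q_ideal] by simp
  qed
qed

lemma alg_hom_mod_phi: "alg_hom_mod scale (\<lambda>c. [:[:c:]:]) (Q_ideal r) phi"
proof (rule alg_hom_mod_if_homogeneous[OF is_ideal_Q_ideal])
  show "phi (x + y) = phi x + phi y" for x y by (rule phi_add)
  show "phi (scale c x) = [:[:c:]:] * phi x" for c x by (rule phi_scale)
  show "phi 1 = 1" by (rule phi_one)
  show "phi (x * y) - phi x * phi y \<in> Q_ideal r" if "x \<in> Agr (Suc i)" "y \<in> Agr (Suc j)" for i j x y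
    using that by (rule phi_mult_positive_degrees)
qed

lemma phi_l0: "phi l0 = QX"
proof -
  have "coeff (normal 1 l0) lowest = 1" "coeff (normal 1 l0) (lowest + gap) = 0"
    using eq_upto_coeff[OF normal_l0] lowest_le gap_below_truncation_le[of 1] r_pos gap_pos by auto
  then show ?thesis
    using phi_homogeneous[OF l0(1)] r_pos by (simp add: phi_deg_def Q_monomial_def pCons_one)
qed

lemma phi_preimage_QY: "\<exists>a. phi a = QY"
proof -
  obtain l where l: "l \<in> Agr 1" "coeff (normal 1 l) (lowest + gap) \<noteq> 0"
    using gap_attained_degree_one by blast
  define p \<mu> where "p = coeff (normal 1 l) lowest" and "\<mu> = coeff (normal 1 l) (lowest + gap)"
  have "phi l = [:[:p:]:] * QX + [:[:\<mu>:]:] * QY"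
    using phi_homogeneous[OF l(1)] r_pos by (simp add: phi_deg_def Q_monomial_def p_def \<mu>_def)
  then have "phi (l + scale (- p) l0) = [:[:\<mu>:]:] * QY"
    by (simp add: phi_add phi_diff phi_scale phi_l0)
  then have "phi (scale (inverse \<mu>) (l + scale (- p) l0)) = [:[:inverse \<mu> * \<mu>:]:] * QY"
    by (simp add: phi_scale)
  also have "inverse \<mu> * \<mu> = 1" using l(2) by (simp add: \<mu>_def)
  finally have "phi (scale (inverse \<mu>) (l + scale (- p) l0)) = QY" by (simp only: pCons_one mult_1)
  then show ?thesis by (rule exI)
qed

lemma surjection_onto_Q:
  "\<exists>\<phi>. alg_hom_mod scale (\<lambda>c. [:[:c:]:]) (Q_ideal r) \<phi> \<and> (\<forall>q. \<exists>a. q - \<phi> a \<in> Q_ideal r)"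
proof -
  obtain y where y: "phi y = QY" using phi_preimage_QY by blast
  have "\<exists>a. q - phi a \<in> Q_ideal r" for q
  proof (rule alg_hom_mod_surjective_if_generators[OF is_ideal_Q_ideal alg_hom_mod_phi])
    show "\<exists>a. QX - phi a \<in> Q_ideal r"
      using phi_l0 is_ideal_zero[OF is_ideal_Q_ideal] by (intro exI[of _ l0]) simp
    show "\<exists>a. QY - phi a \<in> Q_ideal r"
      using y is_ideal_zero[OF is_ideal_Q_ideal] by (intro exI[of _ y]) simp
  qed
  with alg_hom_mod_phi show ?thesis by blast
qed

end

context connected_graded_algebra
begin

lemma surjection_onto_Q_if_mem_crit_set:
  assumes "r \<in> crit_set scale Agr"
  shows "\<exists>\<phi>. alg_hom_mod scale (\<lambda>c. [:[:c:]:]) (Q_ideal r) \<phi> \<and> (\<forall>q. \<exists>a. q - \<phi> a \<in> Q_ideal r)"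
proof -
  obtain N and \<alpha> :: "'a \<Rightarrow> 'k poly" where hom: "alg_hom_mod scale (\<lambda>c. [:c:]) (trunc_ideal N) \<alpha>"
    and "quot_dim_ge2 (\<lambda>c. [:c:]) (trunc_ideal N) (\<alpha> ` Agr r)"
    using assms unfolding crit_set_def by blast
  then obtain u v where "u \<in> Agr r" "v \<in> Agr r"
    and "\<forall>c d. [:c:] * \<alpha> u + [:d:] * \<alpha> v \<in> trunc_ideal N \<longrightarrow> c = 0 \<and> d = 0"
    unfolding quot_dim_ge2_def by blast
  then interpret crit_witness scale Agr \<alpha> N r u v
    using hom by unfold_locales auto
  show ?thesis by (rule surjection_onto_Q)
qed

end

theorem proposition2p5:
  fixes scale :: "'k::field_char_0 \<Rightarrow> 'a::comm_ring_1 \<Rightarrow> 'a"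
    and Agr :: "nat \<Rightarrow> 'a set"
  assumes alg_closed: "\<forall>p::'k poly. degree p > 0 \<longrightarrow> (\<exists>x. poly p x = 0)"
    and "kalg scale"
    and "finite_dim scale"
    and "std_graded scale Agr"
    and "\<not> principal_ideal_algebra TYPE('a)"
  shows "\<exists>\<phi>. alg_hom_mod scale (\<lambda>c. [:[:c:]:]) (Q_ideal (crit_deg scale Agr)) \<phi> \<and>
             (\<forall>q. \<exists>a. q - \<phi> a \<in> Q_ideal (crit_deg scale Agr))"
proof -
  interpret std_graded_algebra scale Agr
    using assms(2,4) by unfold_locales
  interpret connected_graded_algebra scale Agr
    using degree_zero_scalar_if_alg_closed[OF alg_closed assms(3)] by unfold_locales
  obtain u v where "u \<in> Agr 1" "v \<in> Agr 1" "\<And>c d. scale c u + scale d v = 0 \<Longrightarrow> c = 0 \<and> d = 0"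
    using degree_one_independent_pair[OF assms(5)] by blast
  then have "1 \<in> crit_set scale Agr" by (rule one_mem_crit_set)
  then have "crit_deg scale Agr \<in> crit_set scale Agr"
    unfolding crit_deg_def using finite_crit_set by (intro Max_in) auto
  then show ?thesis by (rule surjection_onto_Q_if_mem_crit_set)
qed

end
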